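(* Let $q$ be odd. If $k=2m$ is even, then $\mathfrak{g}_k(\mathbb{F}_q)$ consists of two graphs, one having exactly $\frac{(q^m-1)(q^{m-1}+1)}{q-1}$ nonlooped vertices and the other exactly $\frac{(q^m+1)(q^{m-1}-1)}{q-1}$ nonlooped vertices. If $k=2m+1$ is odd, then the (unique) graph in $\mathfrak{g}_k(\mathbb{F}_q)$ has exactly $\frac{q^{2m}-1}{q-1}$ nonlooped vertices.
   Context: For a symmetric $n\times n$ matrix $A$, the looped graph corresponding to $A$, $\Gamma(A)$, has vertex set $\{1,\dots,n\}$, an edge $ij$ ($i\neq j$) iff $a_{ij}\neq0$, and a loop at $i$ iff $a_{ii}\ne 0$. Definition of $\mathfrak{g}_k(\mathbb{F}_q)$: let $x_1,\dots,x_m$ be representatives of the classes of nonzero vectors of $\mathbb{F}_q^k$ under the relation $x\sim cx$ ($c\in\mathbb{F}_q$, $c\neq0$), and let $U=[x_1\ \cdots\ x_m]$; $\mathfrak{g}_k(\mathbb{F}_q)$ is the set of isomorphism classes of looped graphs $\Gamma(U^tBU)$ as $B$ ranges over the invertible symmetric $k\times k$ matrices over $\mathbb{F}_q$. *)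

theory Defs
  imports "Jordan_Normal_Form.Matrix"
begin

text \<open>A looped graph: vertex set together with a symmetric adjacency relation;
  a loop at i is E i i.\<close>
type_synonym lgraph = "nat set \<times> (nat \<Rightarrow> nat \<Rightarrow> bool)"

definition looped_graph_of :: "'a::zero mat \<Rightarrow> lgraph" where
  "looped_graph_of A = ({0..<dim_row A}, \<lambda>i j. A $$ (i,j) \<noteq> 0)"

definition lgraph_iso :: "lgraph \<Rightarrow> lgraph \<Rightarrow> bool" where
  "lgraph_iso G H \<longleftrightarrow> (\<exists>f. bij_betw f (fst G) (fst H) \<and>
      (\<forall>i\<in>fst G. \<forall>j\<in>fst G. snd G i j \<longleftrightarrow> snd H (f i) (f j)))"

definition nonlooped_count :: "lgraph \<Rightarrow> nat" where
  "nonlooped_count G = card {i \<in> fst G. \<not> snd G i i}"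

text \<open>xs is a list of representatives of the classes of nonzero vectors of F^k
  under x ~ c x (c nonzero): every nonzero vector is a nonzero multiple of
  exactly one entry.\<close>
definition proj_reps :: "nat \<Rightarrow> 'a::field vec list \<Rightarrow> bool" where
  "proj_reps k xs \<longleftrightarrow>
     (\<forall>x\<in>set xs. x \<in> carrier_vec k \<and> x \<noteq> 0\<^sub>v k) \<and>
     (\<forall>v\<in>carrier_vec k. v \<noteq> 0\<^sub>v k \<longrightarrow>
        (\<exists>!i. i < length xs \<and> (\<exists>c. c \<noteq> 0 \<and> v = c \<cdot>\<^sub>v (xs ! i))))"

text \<open>The graphs Gamma(U^t B U), U = [x_1 ... x_m], B invertible symmetric k x k.
  g_k is the set of isomorphism classes of these graphs.\<close>
definition gk_graphs :: "nat \<Rightarrow> 'a::field vec list \<Rightarrow> lgraph set" where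
  "gk_graphs k xs = {looped_graph_of (transpose_mat (mat_of_cols k xs) * B * mat_of_cols k xs)
      | B. B \<in> carrier_mat k k \<and> transpose_mat B = B \<and> invertible_mat B}"

end

theory Submission
  imports Defs "HOL-Number_Theory.Residues" "Berlekamp_Zassenhaus.Berlekamp_Type_Based"
begin

text \<open>
  The graph of U^t B U has the representatives x_1, ..., x_m of the points of the projective
  space over F_q^k as vertices, and i, j are adjacent iff beta(x_i, x_j) \<noteq> 0, where beta is the
  symmetric bilinear form of B.

  Forms that are equivalent under an injective map commuting with scalars
  give isomorphic graphs, since such a map permutes the projective points
  (equiv_forms_graph_iso); and the number n of nonlooped vertices satisfies
  n (q - 1) + 1 = number of isotropic vectors (nonlooped_count_isotropic).

  A nondegenerate symmetric form over a field of odd order is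
  diagonalizable (locale nondeg_sym_form), and a nondegenerate diagonal form is determined up to
  equivalence by the square class of its determinant (equiv_dform_discriminant), because every
  element is represented by every binary form a x^2 + b y^2 (binary_form_represents).  So in
  dimension 2m every form is equivalent to m hyperbolic planes or to an anisotropic plane plus
  m - 1 hyperbolic planes (classify_even), and in odd dimension all forms are equivalent up to a
  scalar (classify_odd).

  Adjoining a hyperbolic plane x^2 - y^2 = (x + y)(x - y) to a form in N variables
  changes the number Z of isotropic vectors into q Z + q^N (q - 1)
  (isotropic_count_hyperbolic_step), which yields closed formulas for the representatives of
  (2) (nonlooped_count_hyp_ext).  The two counts in even dimension differ, so the two graphs are
  not isomorphic.
\<close>

section \<open>Finite fields of odd order\<close>

lemma card_field_ge_2: "card (UNIV::'a::{finite,field} set) \<ge> 2"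
proof -
  have "card {0::'a, 1} \<le> card (UNIV::'a set)" by (rule card_mono) auto
  then show ?thesis by simp
qed

definition squares :: "'a::times set" where
  "squares = range (\<lambda>x. x * x)"

lemma nonsquare_nonzero: "(e::'a::ring_1) \<notin> squares \<Longrightarrow> e \<noteq> 0"
  unfolding squares_def by (metis mult_zero_left rangeI)

context
  fixes ty :: "'a::{finite,field} itself"
  assumes odd_card: "odd (card (UNIV::'a set))"
begin

text \<open>A field of odd order has characteristic different from 2, because its characteristic
  divides its order.\<close>
lemma two_neq_zero: "(2::'a) \<noteq> 0"
proof
  assume "(2::'a) = 0"
  then have "CHAR('a) dvd 2" using of_nat_eq_0_iff_char_dvd[of 2, where 'a='a] by simp
  moreover have "CHAR('a) \<noteq> 1" using CHAR_not_1[where 'a='a] by simp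
  ultimately have "CHAR('a) = 2" using two_is_prime_nat prime_nat_iff by blast
  then show False using CHAR_dvd_CARD[where 'a='a] odd_card by simp
qed

lemma neg_neq_self: "(x::'a) \<noteq> 0 \<Longrightarrow> -x \<noteq> x"
proof
  assume "x \<noteq> 0" and "-x = x"
  then have "2 * x = 0" by (metis add.right_inverse mult_2)
  then show False using two_neq_zero \<open>x \<noteq> 0\<close> by simp
qed

text \<open>Squaring is two-to-one on the nonzero elements, so there are exactly (q - 1)/2 nonzero
  squares and (q + 1)/2 squares in all.\<close>
lemma card_nonzero_squares:
  "card (UNIV::'a set) - 1 = 2 * card ((\<lambda>x::'a. x * x) ` (UNIV - {0}))"
proof -
  let ?S = "(\<lambda>x::'a. x * x) ` (UNIV - {0})"
  have fibre: "card {x. x * x = y} = 2" if "y \<in> ?S" for y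
  proof -
    from that obtain s where "y = s * s" "s \<in> UNIV - {0}" by (rule imageE)
    then have s: "s \<noteq> 0" "y = s * s" by auto
    have "{x. x * x = y} = {s, -s}" using s(2) by (auto simp: square_eq_iff)
    moreover have "s \<noteq> -s" using neg_neq_self[OF s(1)] by (rule not_sym)
    ultimately show ?thesis by simp
  qed
  have "UNIV - {0::'a} = (\<Union>y\<in>?S. {x. x * x = y})" by auto
  then have "card (UNIV - {0::'a}) = card (\<Union>y\<in>?S. {x. x * x = y})" by simp
  also have "\<dots> = (\<Sum>y\<in>?S. card {x. x * x = y})"
    by (rule card_UN_disjoint) auto
  also have "\<dots> = (\<Sum>y\<in>?S. 2)" using fibre by simp
  finally show ?thesis by simp
qed

lemma card_squares: "2 * card (squares::'a set) = card (UNIV::'a set) + 1"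
proof -
  have sq: "squares = insert 0 ((\<lambda>x::'a. x * x) ` (UNIV - {0}))"
    unfolding squares_def by auto
  have "0 \<notin> (\<lambda>x::'a. x * x) ` (UNIV - {0})" by auto
  then have "card (squares::'a set) = card ((\<lambda>x::'a. x * x) ` (UNIV - {0})) + 1"
    unfolding sq by (subst card_insert_disjoint) auto
  then show ?thesis using card_nonzero_squares card_field_ge_2[where 'a='a] by simp
qed

text \<open>Every element is represented by any nondegenerate binary diagonal form: the sets
  a * squares and c - b * squares both have more than q/2 elements, so they meet.\<close>
lemma binary_form_represents:
  assumes a: "(a::'a) \<noteq> 0" and b: "b \<noteq> 0"
  shows "\<exists>x y. a * (x * x) + b * (y * y) = c"
proof -
  let ?X = "(\<lambda>s. a * s) ` squares" and ?Y = "(\<lambda>s. c - b * s) ` squares"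
  have cX: "card ?X = card (squares::'a set)" by (rule card_image) (use a in \<open>auto simp: inj_on_def\<close>)
  have cY: "card ?Y = card (squares::'a set)" by (rule card_image) (use b in \<open>auto simp: inj_on_def\<close>)
  have "card (?X \<union> ?Y) \<le> card (UNIV::'a set)" by (rule card_mono) auto
  moreover have "card (?X \<union> ?Y) + card (?X \<inter> ?Y) = card ?X + card ?Y"
    using card_Un_Int[of ?X ?Y] by simp
  ultimately have "?X \<inter> ?Y \<noteq> {}" using cX cY card_squares by auto
  then obtain x y where "a * (x * x) = c - b * (y * y)" unfolding squares_def by auto
  then show ?thesis by (metis diff_add_cancel)
qed

lemma exists_nonsquare: "\<exists>e::'a. e \<notin> squares"
proof -
  have "card (squares::'a set) < card (UNIV::'a set)"
    using card_squares card_field_ge_2[where 'a='a] by simp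
  then have "squares \<noteq> (UNIV::'a set)" by auto
  then show ?thesis by auto
qed

text \<open>Multiplication by e maps the (q - 1)/2 nonzero squares injectively into the (q - 1)/2
  nonsquares, so it hits every nonsquare.\<close>
lemma square_classes:
  assumes e: "(e::'a) \<notin> squares" and x: "x \<noteq> 0"
  shows "x \<in> squares \<or> (\<exists>s. x = e * (s * s))"
proof (rule ccontr)
  assume h: "\<not> (x \<in> squares \<or> (\<exists>s. x = e * (s * s)))"
  let ?S = "(\<lambda>x::'a. x * x) ` (UNIV - {0})"
  have e0: "e \<noteq> 0" using nonsquare_nonzero[OF e] .
  have "e * s \<notin> squares" if "s \<in> ?S" for s
  proof
    assume "e * s \<in> squares"
    then obtain t where t: "e * s = t * t" unfolding squares_def by auto
    obtain r where r: "r \<noteq> 0" "s = r * r" using \<open>s \<in> ?S\<close> by auto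
    have "e = (t / r) * (t / r)" using t r e0 by (simp add: field_simps)
    then have "e \<in> squares" unfolding squares_def by (rule image_eqI) simp
    then show False using e by simp
  qed
  then have sub: "insert x ((\<lambda>s. e * s) ` ?S) \<subseteq> UNIV - squares" using h by auto
  have "x \<notin> (\<lambda>s. e * s) ` ?S" using h by auto
  moreover have "card ((\<lambda>s. e * s) ` ?S) = card ?S"
    by (rule card_image) (use e0 in \<open>auto simp: inj_on_def\<close>)
  ultimately have "card (insert x ((\<lambda>s. e * s) ` ?S)) = card ?S + 1" by simp
  moreover have "card (insert x ((\<lambda>s. e * s) ` ?S)) \<le> card (UNIV - (squares::'a set))"
    using sub by (rule card_mono[rotated]) simp
  moreover have "card (UNIV - (squares::'a set)) = card (UNIV::'a set) - card (squares::'a set)"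
    by (simp add: card_Diff_subset)
  ultimately show False using card_squares card_nonzero_squares by linarith
qed

end


lemma lgraph_iso_sym: assumes "lgraph_iso G H" shows "lgraph_iso H G"
proof -
  obtain f where f: "bij_betw f (fst G) (fst H)"
    "\<forall>i\<in>fst G. \<forall>j\<in>fst G. snd G i j \<longleftrightarrow> snd H (f i) (f j)"
    using assms unfolding lgraph_iso_def by blast
  let ?g = "inv_into (fst G) f"
  have g: "bij_betw ?g (fst H) (fst G)" using f(1) by (rule bij_betw_inv_into)
  have "snd H i j \<longleftrightarrow> snd G (?g i) (?g j)" if "i \<in> fst H" "j \<in> fst H" for i j
  proof -
    have "?g i \<in> fst G" "?g j \<in> fst G" using g that by (auto simp: bij_betw_def)
    moreover have "f (?g i) = i" "f (?g j) = j" using f(1) that by (auto simp: bij_betw_inv_into_right)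
    ultimately show ?thesis using f(2) by metis
  qed
  then show ?thesis unfolding lgraph_iso_def using g by blast
qed

lemma lgraph_iso_trans: assumes "lgraph_iso G H" "lgraph_iso H K" shows "lgraph_iso G K"
proof -
  obtain f where f: "bij_betw f (fst G) (fst H)"
    "\<forall>i\<in>fst G. \<forall>j\<in>fst G. snd G i j \<longleftrightarrow> snd H (f i) (f j)"
    using assms(1) unfolding lgraph_iso_def by blast
  obtain g where g: "bij_betw g (fst H) (fst K)"
    "\<forall>i\<in>fst H. \<forall>j\<in>fst H. snd H i j \<longleftrightarrow> snd K (g i) (g j)"
    using assms(2) unfolding lgraph_iso_def by blast
  have "bij_betw (g \<circ> f) (fst G) (fst K)" using f(1) g(1) by (rule bij_betw_trans)
  moreover have "f i \<in> fst H" if "i \<in> fst G" for i using f(1) that by (auto simp: bij_betw_def)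
  ultimately show ?thesis unfolding lgraph_iso_def using f(2) g(2) by auto
qed

lemma lgraph_iso_nonlooped_count:
  assumes "lgraph_iso G H"
  shows "nonlooped_count G = nonlooped_count H"
proof -
  obtain f where f: "bij_betw f (fst G) (fst H)"
    "\<forall>i\<in>fst G. \<forall>j\<in>fst G. snd G i j \<longleftrightarrow> snd H (f i) (f j)"
    using assms unfolding lgraph_iso_def by blast
  have "f ` {i \<in> fst G. \<not> snd G i i} = {i \<in> fst H. \<not> snd H i i}"
  proof
    show "f ` {i \<in> fst G. \<not> snd G i i} \<subseteq> {i \<in> fst H. \<not> snd H i i}"
      using f by (auto simp: bij_betw_def)
    show "{i \<in> fst H. \<not> snd H i i} \<subseteq> f ` {i \<in> fst G. \<not> snd G i i}"
    proof
      fix i assume i: "i \<in> {i \<in> fst H. \<not> snd H i i}"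
      then obtain j where "j \<in> fst G" "i = f j" using f(1) by (auto simp: bij_betw_def)
      then show "i \<in> f ` {i \<in> fst G. \<not> snd G i i}" using i f(2) by auto
    qed
  qed
  moreover have "inj_on f {i \<in> fst G. \<not> snd G i i}"
    using f(1) by (auto simp: bij_betw_def inj_on_def)
  ultimately show ?thesis unfolding nonlooped_count_def using card_image by fastforce
qed


lemma nonzero_vec_coord:
  assumes "x \<in> carrier_vec k" "x \<noteq> 0\<^sub>v k"
  obtains l where "l < k" "x $ l \<noteq> 0"
proof -
  have "\<exists>l<k. x $ l \<noteq> 0"
  proof (rule ccontr)
    assume "\<not> (\<exists>l<k. x $ l \<noteq> 0)"
    then have "x = 0\<^sub>v k" using assms(1) by (intro eq_vecI) auto
    then show False using assms(2) by simp
  qed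
  then show ?thesis using that by blast
qed

lemma smult_vec_nonzero:
  assumes "x \<in> carrier_vec k" "x \<noteq> 0\<^sub>v k" "(c::'a::field) \<noteq> 0"
  shows "c \<cdot>\<^sub>v x \<noteq> 0\<^sub>v k"
proof -
  obtain l where l: "l < k" "x $ l \<noteq> 0" using nonzero_vec_coord[OF assms(1,2)] .
  then have "(c \<cdot>\<^sub>v x) $ l \<noteq> 0" using assms by simp
  then show ?thesis using l(1) by auto
qed

lemma smult_vec_cancel:
  assumes "x \<in> carrier_vec k" "x \<noteq> 0\<^sub>v k" "(a::'a::field) \<cdot>\<^sub>v x = b \<cdot>\<^sub>v x"
  shows "a = b"
proof -
  obtain l where l: "l < k" "x $ l \<noteq> 0" using nonzero_vec_coord[OF assms(1,2)] .
  have "a * x $ l = b * x $ l" using arg_cong[OF assms(3), of "\<lambda>v. v $ l"] l assms(1) by simp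
  then show ?thesis using l(2) by simp
qed

lemma zero_smult_vec: "(0::'a::semiring_0) \<cdot>\<^sub>v v = 0\<^sub>v (dim_vec v)"
  by (intro eq_vecI) auto

lemma proj_reps_nth:
  assumes "proj_reps k xs" "i < length xs"
  shows "xs ! i \<in> carrier_vec k" "xs ! i \<noteq> 0\<^sub>v k"
  using assms unfolding proj_reps_def by auto

lemma proj_reps_same_class:
  assumes pr: "proj_reps k xs" and eq: "xs ! i = c \<cdot>\<^sub>v xs ! j" and c: "(c::'a::field) \<noteq> 0"
    and i: "i < length xs" and j: "j < length xs"
  shows "i = j"
proof -
  have "\<exists>!l. l < length xs \<and> (\<exists>c. c \<noteq> 0 \<and> xs ! i = c \<cdot>\<^sub>v xs ! l)"
    using pr proj_reps_nth[OF pr i] unfolding proj_reps_def by blast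
  moreover have "\<exists>c. c \<noteq> (0::'a) \<and> xs ! i = c \<cdot>\<^sub>v xs ! i" by (intro exI[of _ 1]) simp
  ultimately show ?thesis using eq c i j by blast
qed

lemma proj_reps_bij:
  assumes pr: "proj_reps k (xs :: 'a::field vec list)"
  shows "bij_betw (\<lambda>(i, c). c \<cdot>\<^sub>v xs ! i) ({0..<length xs} \<times> (UNIV - {0}))
           (carrier_vec k - {0\<^sub>v k})"
proof (rule bij_betwI')
  fix p p' assume p: "p \<in> {0..<length xs} \<times> (UNIV - {0::'a})" and p': "p' \<in> {0..<length xs} \<times> (UNIV - {0::'a})"
  obtain i c j d where pq: "p = (i, c)" "p' = (j, d)" by (cases p, cases p')
  have i: "i < length xs" "c \<noteq> 0" and j: "j < length xs" "d \<noteq> 0" using p p' pq by auto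
  show "((\<lambda>(i, c). c \<cdot>\<^sub>v xs ! i) p = (\<lambda>(i, c). c \<cdot>\<^sub>v xs ! i) p') = (p = p')"
  proof
    assume "(\<lambda>(i, c). c \<cdot>\<^sub>v xs ! i) p = (\<lambda>(i, c). c \<cdot>\<^sub>v xs ! i) p'"
    then have e: "c \<cdot>\<^sub>v xs ! i = d \<cdot>\<^sub>v xs ! j" using pq by simp
    have "xs ! i = inverse c \<cdot>\<^sub>v (c \<cdot>\<^sub>v xs ! i)" using i(2) by (simp add: smult_smult_assoc)
    also have "\<dots> = (inverse c * d) \<cdot>\<^sub>v xs ! j" unfolding e by (simp add: smult_smult_assoc)
    finally have "i = j" using proj_reps_same_class[OF pr] i j by simp
    then have "c = d" using smult_vec_cancel[OF proj_reps_nth[OF pr i(1)]] e by simp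
    then show "p = p'" using pq \<open>i = j\<close> by simp
  qed simp
next
  fix p assume p: "p \<in> {0..<length xs} \<times> (UNIV - {0::'a})"
  obtain i c where pic: "p = (i, c)" by (cases p)
  with p have i: "i < length xs" and c: "c \<noteq> 0" by auto
  show "(\<lambda>(i, c). c \<cdot>\<^sub>v xs ! i) p \<in> carrier_vec k - {0\<^sub>v k}"
    using pic proj_reps_nth[OF pr i] smult_vec_nonzero[OF proj_reps_nth[OF pr i] c] by auto
next
  fix v :: "'a vec" assume "v \<in> carrier_vec k - {0\<^sub>v k}"
  then obtain i c where "i < length xs" "c \<noteq> 0" "v = c \<cdot>\<^sub>v xs ! i"
    using pr unfolding proj_reps_def by blast
  then show "\<exists>p\<in>{0..<length xs} \<times> (UNIV - {0}). v = (\<lambda>(i, c). c \<cdot>\<^sub>v xs ! i) p" by force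
qed


section \<open>Scalar-compatible bijections and equivalence of forms\<close>

definition scalar_map :: "nat \<Rightarrow> ('a::field vec \<Rightarrow> 'a vec) \<Rightarrow> bool" where
  "scalar_map k S \<longleftrightarrow> (\<forall>u\<in>carrier_vec k. S u \<in> carrier_vec k) \<and> inj_on S (carrier_vec k) \<and>
     (\<forall>a. \<forall>u\<in>carrier_vec k. S (a \<cdot>\<^sub>v u) = a \<cdot>\<^sub>v S u)"

lemma scalar_map_id: "scalar_map k id"
  unfolding scalar_map_def by auto

lemma scalar_map_comp:
  assumes S: "scalar_map k S" and T: "scalar_map k T"
  shows "scalar_map k (S \<circ> T)"
proof -
  have TV: "\<forall>u\<in>carrier_vec k. T u \<in> carrier_vec k" and Tinj: "inj_on T (carrier_vec k)"
    and Sinj: "inj_on S (carrier_vec k)" using S T unfolding scalar_map_def by blast+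
  have "inj_on (S \<circ> T) (carrier_vec k)"
  proof
    fix u v assume u: "u \<in> carrier_vec k" and v: "v \<in> carrier_vec k" and "(S \<circ> T) u = (S \<circ> T) v"
    then have "S (T u) = S (T v)" by simp
    then have "T u = T v" by (rule inj_onD[OF Sinj]) (use TV u v in simp_all)
    then show "u = v" by (rule inj_onD[OF Tinj]) (use u v in simp_all)
  qed
  then show ?thesis using S T TV unfolding scalar_map_def by simp
qed

lemma scalar_map_inverse:
  assumes S: "scalar_map k (S :: 'a::{finite,field} vec \<Rightarrow> 'a vec)"
  obtains T where "scalar_map k T" "\<And>u. u \<in> carrier_vec k \<Longrightarrow> S (T u) = u"
proof -
  let ?V = "carrier_vec k :: 'a vec set"
  have SV: "\<forall>u\<in>?V. S u \<in> ?V" and inj: "inj_on S ?V" and lin: "\<forall>a. \<forall>u\<in>?V. S (a \<cdot>\<^sub>v u) = a \<cdot>\<^sub>v S u"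
    using S unfolding scalar_map_def by blast+
  have "S ` ?V = ?V" by (rule endo_inj_surj) (use SV inj in auto)
  then have bij: "bij_betw S ?V ?V" using inj by (simp add: bij_betw_def)
  let ?T = "inv_into ?V S"
  have TV: "\<forall>u\<in>?V. ?T u \<in> ?V" using bij_betw_inv_into[OF bij] by (auto simp: bij_betw_def)
  have ST: "S (?T u) = u" if "u \<in> ?V" for u using bij that by (simp add: bij_betw_inv_into_right)
  have TS: "?T (S u) = u" if "u \<in> ?V" for u using inj that by (simp add: inv_into_f_f)
  have "?T (a \<cdot>\<^sub>v u) = a \<cdot>\<^sub>v ?T u" if u: "u \<in> ?V" for a u
  proof -
    have "S (a \<cdot>\<^sub>v ?T u) = a \<cdot>\<^sub>v u" using lin TV u ST[OF u] by simp
    then show ?thesis using TS TV u by (metis smult_carrier_vec)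
  qed
  moreover have "inj_on ?T ?V" using bij_betw_inv_into[OF bij] by (simp add: bij_betw_def)
  ultimately have "scalar_map k ?T" unfolding scalar_map_def using TV by blast
  then show ?thesis using that ST by blast
qed

lemma scalar_map_nonzero:
  assumes S: "scalar_map k S" and x: "x \<in> carrier_vec k" "x \<noteq> 0\<^sub>v k"
  shows "S x \<noteq> 0\<^sub>v k"
proof
  assume Sx: "S x = 0\<^sub>v k"
  have z: "0\<^sub>v k \<in> carrier_vec k" by simp
  have S0: "S (0\<^sub>v k) \<in> carrier_vec k" using S z unfolding scalar_map_def by blast
  have "S (0\<^sub>v k) = S (0 \<cdot>\<^sub>v 0\<^sub>v k)" by (simp add: zero_smult_vec)
  also have "\<dots> = 0 \<cdot>\<^sub>v S (0\<^sub>v k)" using S z unfolding scalar_map_def by blast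
  also have "\<dots> = 0\<^sub>v k" using S0 by (simp add: zero_smult_vec)
  finally have "S x = S (0\<^sub>v k)" using Sx by simp
  moreover have "inj_on S (carrier_vec k)" using S unfolding scalar_map_def by blast
  ultimately have "x = 0\<^sub>v k" using inj_onD x(1) z by metis
  then show False using x(2) by simp
qed

lemma scalar_map_permutes_reps:
  assumes pr: "proj_reps k xs" and S: "scalar_map k S"
  obtains \<sigma> \<alpha> where "bij_betw \<sigma> {0..<length xs} {0..<length xs}"
    "\<And>i. i < length xs \<Longrightarrow> \<alpha> i \<noteq> 0 \<and> S (xs ! i) = \<alpha> i \<cdot>\<^sub>v xs ! \<sigma> i"
proof -
  let ?n = "length xs" and ?V = "carrier_vec k"
  have SV: "\<forall>u\<in>?V. S u \<in> ?V" and Sinj: "inj_on S ?V" and Slin: "\<forall>a. \<forall>u\<in>?V. S (a \<cdot>\<^sub>v u) = a \<cdot>\<^sub>v S u"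
    using S unfolding scalar_map_def by blast+
  have "\<exists>j c. j < ?n \<and> c \<noteq> 0 \<and> S (xs ! i) = c \<cdot>\<^sub>v xs ! j" if i: "i < ?n" for i
  proof -
    have "S (xs ! i) \<in> ?V" "S (xs ! i) \<noteq> 0\<^sub>v k"
      using SV scalar_map_nonzero[OF S] proj_reps_nth[OF pr i] by auto
    then show ?thesis using pr unfolding proj_reps_def by blast
  qed
  then obtain \<sigma> \<alpha> where \<sigma>\<alpha>: "\<And>i. i < ?n \<Longrightarrow> \<sigma> i < ?n \<and> \<alpha> i \<noteq> 0 \<and> S (xs ! i) = \<alpha> i \<cdot>\<^sub>v xs ! \<sigma> i"
    by metis
  have inj: "inj_on \<sigma> {0..<?n}"
  proof
    fix i i' assume i: "i \<in> {0..<?n}" and i': "i' \<in> {0..<?n}" and e: "\<sigma> i = \<sigma> i'"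
    let ?c = "\<alpha> i / \<alpha> i'"
    have "S (?c \<cdot>\<^sub>v xs ! i') = ?c \<cdot>\<^sub>v S (xs ! i')" using Slin proj_reps_nth[OF pr] i' by simp
    also have "\<dots> = S (xs ! i)" using \<sigma>\<alpha> i i' e by (simp add: smult_smult_assoc)
    finally have eq: "?c \<cdot>\<^sub>v xs ! i' = xs ! i"
      by (rule inj_onD[OF Sinj]) (use proj_reps_nth[OF pr] i i' in auto)
    have "?c \<noteq> 0" using \<sigma>\<alpha> i i' by simp
    then show "i = i'" using proj_reps_same_class[OF pr eq[symmetric]] i i' by simp
  qed
  have "\<sigma> ` {0..<?n} \<subseteq> {0..<?n}" using \<sigma>\<alpha> by auto
  then have "bij_betw \<sigma> {0..<?n} {0..<?n}"
    using inj endo_inj_surj[OF finite_atLeastLessThan _ inj] by (simp add: bij_betw_def)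
  then show ?thesis using that \<sigma>\<alpha> by blast
qed

text \<open>Two forms are equivalent if one is a nonzero multiple of the other composed with a
  scalar map; the forms need not be bilinear, which lets us treat diagonal forms directly.\<close>
definition equiv_forms :: "nat \<Rightarrow> ('a::field vec \<Rightarrow> 'a vec \<Rightarrow> 'a) \<Rightarrow> ('a vec \<Rightarrow> 'a vec \<Rightarrow> 'a) \<Rightarrow> bool" where
  "equiv_forms k \<beta> \<beta>' \<longleftrightarrow> (\<exists>S c. scalar_map k S \<and> c \<noteq> 0 \<and>
     (\<forall>u\<in>carrier_vec k. \<forall>v\<in>carrier_vec k. \<beta> (S u) (S v) = c * \<beta>' u v))"

lemma equiv_formsI:
  assumes "scalar_map k S" "c \<noteq> 0"
    and "\<And>u v. u \<in> carrier_vec k \<Longrightarrow> v \<in> carrier_vec k \<Longrightarrow> \<beta> (S u) (S v) = c * \<beta>' u v"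
  shows "equiv_forms k \<beta> \<beta>'"
  unfolding equiv_forms_def using assms by blast

lemma equiv_forms_refl: "equiv_forms k \<beta> \<beta>"
  by (rule equiv_formsI[OF scalar_map_id, of 1]) simp_all

lemma equiv_forms_trans:
  assumes "equiv_forms k \<beta> \<beta>'" "equiv_forms k \<beta>' \<beta>''"
  shows "equiv_forms k \<beta> \<beta>''"
proof -
  obtain S c where S: "scalar_map k S" "c \<noteq> 0" "\<forall>u\<in>carrier_vec k. \<forall>v\<in>carrier_vec k. \<beta> (S u) (S v) = c * \<beta>' u v"
    using assms(1) unfolding equiv_forms_def by blast
  obtain T d where T: "scalar_map k T" "d \<noteq> 0" "\<forall>u\<in>carrier_vec k. \<forall>v\<in>carrier_vec k. \<beta>' (T u) (T v) = d * \<beta>'' u v"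
    using assms(2) unfolding equiv_forms_def by blast
  have TV: "T u \<in> carrier_vec k" if "u \<in> carrier_vec k" for u using T(1) that unfolding scalar_map_def by blast
  show ?thesis
    by (rule equiv_formsI[OF scalar_map_comp[OF S(1) T(1)], of "c * d"]) (use S T TV in simp_all)
qed

lemma equiv_forms_sym:
  assumes "equiv_forms k \<beta> (\<beta>' :: 'a::{finite,field} vec \<Rightarrow> _)"
  shows "equiv_forms k \<beta>' \<beta>"
proof -
  obtain S c where S: "scalar_map k S" "c \<noteq> 0" "\<forall>u\<in>carrier_vec k. \<forall>v\<in>carrier_vec k. \<beta> (S u) (S v) = c * \<beta>' u v"
    using assms unfolding equiv_forms_def by blast
  obtain T where T: "scalar_map k T" "\<And>u. u \<in> carrier_vec k \<Longrightarrow> S (T u) = u"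
    using scalar_map_inverse[OF S(1)] by blast
  have TV: "T u \<in> carrier_vec k" if "u \<in> carrier_vec k" for u using T(1) that unfolding scalar_map_def by blast
  show ?thesis
  proof (rule equiv_formsI[OF T(1), of "inverse c"])
    fix u v :: "'a vec" assume u: "u \<in> carrier_vec k" and v: "v \<in> carrier_vec k"
    have "\<beta> (S (T u)) (S (T v)) = c * \<beta>' (T u) (T v)" using S(3) TV u v by blast
    then show "\<beta>' (T u) (T v) = inverse c * \<beta> u v" using T(2) u v S(2) by (simp add: field_simps)
  qed (use S(2) in simp)
qed


section \<open>The looped graph of a form on the representatives\<close>

definition form_graph :: "'a vec list \<Rightarrow> ('a vec \<Rightarrow> 'a vec \<Rightarrow> 'a::zero) \<Rightarrow> lgraph" where
  "form_graph xs \<beta> = ({0..<length xs}, \<lambda>i j. \<beta> (xs ! i) (xs ! j) \<noteq> 0)"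

definition homogeneous_form :: "nat \<Rightarrow> ('a::field vec \<Rightarrow> 'a vec \<Rightarrow> 'a) \<Rightarrow> bool" where
  "homogeneous_form k \<beta> \<longleftrightarrow>
     (\<forall>a b. \<forall>u\<in>carrier_vec k. \<forall>v\<in>carrier_vec k. \<beta> (a \<cdot>\<^sub>v u) (b \<cdot>\<^sub>v v) = a * b * \<beta> u v)"

text \<open>Equivalent homogeneous forms induce isomorphic graphs: the isomorphism is the permutation
  of representatives induced by the scalar map, and homogeneity makes adjacency independent of
  the chosen multiples.\<close>
lemma equiv_forms_graph_iso:
  assumes pr: "proj_reps k xs" and eq: "equiv_forms k \<beta> \<beta>'" and hom: "homogeneous_form k \<beta>"
  shows "lgraph_iso (form_graph xs \<beta>') (form_graph xs \<beta>)"
proof -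
  obtain S c where S: "scalar_map k S" "c \<noteq> 0"
    and form: "\<forall>u\<in>carrier_vec k. \<forall>v\<in>carrier_vec k. \<beta> (S u) (S v) = c * \<beta>' u v"
    using eq unfolding equiv_forms_def by blast
  obtain \<sigma> \<alpha> where \<sigma>: "bij_betw \<sigma> {0..<length xs} {0..<length xs}"
    and \<alpha>: "\<And>i. i < length xs \<Longrightarrow> \<alpha> i \<noteq> 0 \<and> S (xs ! i) = \<alpha> i \<cdot>\<^sub>v xs ! \<sigma> i"
    using scalar_map_permutes_reps[OF pr S(1)] by blast
  have "\<beta>' (xs ! i) (xs ! j) \<noteq> 0 \<longleftrightarrow> \<beta> (xs ! \<sigma> i) (xs ! \<sigma> j) \<noteq> 0"
    if i: "i < length xs" and j: "j < length xs" for i j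
  proof -
    have "\<sigma> i < length xs" "\<sigma> j < length xs" using bij_betwE[OF \<sigma>] i j by auto
    then have "c * \<beta>' (xs ! i) (xs ! j) = \<alpha> i * \<alpha> j * \<beta> (xs ! \<sigma> i) (xs ! \<sigma> j)"
      using form \<alpha>[OF i] \<alpha>[OF j] hom proj_reps_nth[OF pr] i j unfolding homogeneous_form_def by metis
    then show ?thesis using S(2) \<alpha>[OF i] \<alpha>[OF j] by (metis mult_eq_0_iff)
  qed
  then show ?thesis unfolding lgraph_iso_def form_graph_def using \<sigma> by (intro exI[of _ \<sigma>]) auto
qed

text \<open>Counting isotropic vectors: a nonlooped vertex i accounts for the q - 1 isotropic vectors
  c xs_i (c nonzero), and the zero vector is the only other isotropic vector.\<close>
lemma nonlooped_count_isotropic: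
  assumes pr: "proj_reps k xs" and hom: "homogeneous_form k \<beta>"
  shows "nonlooped_count (form_graph xs \<beta>) * (card (UNIV::'a set) - 1) + 1
     = card {v \<in> carrier_vec k. \<beta> v v = (0::'a::{finite,field})}"
proof -
  let ?D = "{0..<length xs} \<times> (UNIV - {0::'a})"
  let ?I = "{i \<in> {0..<length xs}. \<beta> (xs ! i) (xs ! i) = 0}"
  let ?Z = "{v \<in> carrier_vec k - {0\<^sub>v k}. \<beta> v v = 0}"
  let ?F = "\<lambda>(i, c). c \<cdot>\<^sub>v xs ! i"
  have bij: "bij_betw ?F ?D (carrier_vec k - {0\<^sub>v k})" by (rule proj_reps_bij[OF pr])
  have "\<beta> (?F p) (?F p) = 0 \<longleftrightarrow> p \<in> ?I \<times> (UNIV - {0})" if "p \<in> ?D" for p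
    using that hom proj_reps_nth[OF pr] unfolding homogeneous_form_def by auto
  then have "{p \<in> ?D. \<beta> (?F p) (?F p) = 0} = ?I \<times> (UNIV - {0})" by auto
  moreover have "?Z = ?F ` {p \<in> ?D. \<beta> (?F p) (?F p) = 0}"
  proof
    have img: "?F ` ?D = carrier_vec k - {0\<^sub>v k}" using bij by (simp add: bij_betw_def)
    show "?Z \<subseteq> ?F ` {p \<in> ?D. \<beta> (?F p) (?F p) = 0}"
    proof
      fix v assume v: "v \<in> ?Z"
      then have "v \<in> ?F ` ?D" using img by simp
      then obtain p where "p \<in> ?D" "v = ?F p" by (rule imageE)
      then show "v \<in> ?F ` {p \<in> ?D. \<beta> (?F p) (?F p) = 0}" using v by blast
    qed
    show "?F ` {p \<in> ?D. \<beta> (?F p) (?F p) = 0} \<subseteq> ?Z" using img by blast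
  qed
  moreover have "inj_on ?F (?I \<times> (UNIV - {0}))"
    using bij unfolding bij_betw_def by (rule inj_on_subset[OF conjunct1]) auto
  ultimately have "card ?Z = card ?I * (card (UNIV::'a set) - 1)"
    by (simp add: card_image card_cartesian_product card_Diff_subset)
  moreover have "\<beta> (0 \<cdot>\<^sub>v 0\<^sub>v k) (0 \<cdot>\<^sub>v 0\<^sub>v k) = 0"
    using hom unfolding homogeneous_form_def by (metis mult_zero_left zero_carrier_vec)
  then have "\<beta> (0\<^sub>v k) (0\<^sub>v k) = 0" by (simp add: zero_smult_vec)
  then have "{v \<in> carrier_vec k. \<beta> v v = 0} = insert (0\<^sub>v k) ?Z" by auto
  moreover have "nonlooped_count (form_graph xs \<beta>) = card ?I"
    unfolding nonlooped_count_def form_graph_def by simp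
  ultimately show ?thesis by simp
qed


definition bform :: "'a::comm_ring mat \<Rightarrow> 'a vec \<Rightarrow> 'a vec \<Rightarrow> 'a" where
  "bform B u v = u \<bullet> (B *\<^sub>v v)"

definition dform :: "nat \<Rightarrow> (nat \<Rightarrow> 'a::comm_ring) \<Rightarrow> 'a vec \<Rightarrow> 'a vec \<Rightarrow> 'a" where
  "dform n d u v = (\<Sum>i<n. d i * (u $ i) * (v $ i))"

lemma homogeneous_bform: "B \<in> carrier_mat k k \<Longrightarrow> homogeneous_form k (bform (B::'a::field mat))"
  unfolding homogeneous_form_def bform_def by (simp add: mult_mat_vec[of B k k] ac_simps)

lemma dform_cong: "(\<And>i. i < k \<Longrightarrow> d i = d' i) \<Longrightarrow> dform k d = dform k d'"
  unfolding dform_def by (intro ext sum.cong) auto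

lemma dform_unit_vec:
  fixes d :: "nat \<Rightarrow> 'a::comm_ring_1"
  assumes "i < k"
  shows "dform k d (unit_vec k i) u = d i * u $ i"
proof -
  have "dform k d (unit_vec k i) u = (\<Sum>j<k. if j = i then d i * u $ i else 0)"
    unfolding dform_def by (intro sum.cong refl) (simp add: unit_vec_def)
  also have "\<dots> = d i * u $ i" using assms by simp
  finally show ?thesis .
qed

lemma mat_diag_dims [simp]: "dim_row (mat_diag n d) = n" "dim_col (mat_diag n d) = n"
  unfolding mat_diag_def by simp_all

lemma mat_diag_cong: "(\<And>i. i < n \<Longrightarrow> d i = d' i) \<Longrightarrow> mat_diag n d = mat_diag n d'"
  unfolding mat_diag_def by (intro eq_matI) auto

lemma mat_diag_mult_vec:
  assumes v: "v \<in> carrier_vec n" and i: "i < n"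
  shows "(mat_diag n d *\<^sub>v v) $ i = d i * v $ i"
proof -
  have "(mat_diag n d *\<^sub>v v) $ i = (\<Sum>j<n. (if i = j then d j else 0) * v $ j)"
    using v i unfolding mat_diag_def by (simp add: scalar_prod_def row_def lessThan_atLeast0)
  also have "\<dots> = (\<Sum>j<n. if j = i then d i * v $ j else 0)" by (intro sum.cong) auto
  finally show ?thesis using i by simp
qed

lemma bform_mat_diag:
  assumes "u \<in> carrier_vec n" "v \<in> carrier_vec n"
  shows "bform (mat_diag n d) u v = dform n d u v"
proof -
  have "bform (mat_diag n d) u v = (\<Sum>i\<in>{0..<n}. u $ i * (mat_diag n d *\<^sub>v v) $ i)"
    using assms unfolding bform_def scalar_prod_def by simp
  also have "\<dots> = (\<Sum>i\<in>{0..<n}. d i * u $ i * v $ i)"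
    by (intro sum.cong refl, subst mat_diag_mult_vec[OF assms(2)]) (auto simp: ac_simps)
  finally show ?thesis unfolding dform_def by (simp add: lessThan_atLeast0)
qed

lemma mat_diag_symmetric: "transpose_mat (mat_diag n d) = mat_diag n d"
  unfolding mat_diag_def by (intro eq_matI) auto

lemma mat_diag_invertible:
  assumes "\<And>i. i < n \<Longrightarrow> (d i :: 'a::field) \<noteq> 0"
  shows "invertible_mat (mat_diag n d)"
proof -
  have "mat_diag n (\<lambda>i. d i * inverse (d i)) = 1\<^sub>m n" "mat_diag n (\<lambda>i. inverse (d i) * d i) = 1\<^sub>m n"
    by (subst mat_diag_one[symmetric], rule mat_diag_cong, simp add: assms)+
  then have "mat_diag n d * mat_diag n (\<lambda>i. inverse (d i)) = 1\<^sub>m n"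
    "mat_diag n (\<lambda>i. inverse (d i)) * mat_diag n d = 1\<^sub>m n" by simp_all
  then show ?thesis unfolding invertible_mat_def inverts_mat_def
    by (auto simp: mat_diag_def square_mat.simps)
qed

lemma congruence_entry:
  assumes xs: "set xs \<subseteq> carrier_vec k" and B: "B \<in> carrier_mat k k"
    and i: "i < length xs" and j: "j < length xs"
  shows "(transpose_mat (mat_of_cols k xs) * B * mat_of_cols k xs) $$ (i, j) = bform B (xs ! i) (xs ! j)"
proof -
  let ?U = "mat_of_cols k xs"
  have U: "?U \<in> carrier_mat k (length xs)" by simp
  have "transpose_mat ?U * B * ?U = transpose_mat ?U * (B * ?U)"
    using B U by (intro assoc_mult_mat[of _ "length xs" k]) auto
  then have "(transpose_mat ?U * B * ?U) $$ (i, j) = row (transpose_mat ?U) i \<bullet> col (B * ?U) j"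
    using i j B by simp
  also have "\<dots> = col ?U i \<bullet> (B *\<^sub>v col ?U j)" using i j B col_mult2[OF B U j] by simp
  also have "\<dots> = bform B (xs ! i) (xs ! j)"
  proof -
    have "xs ! i \<in> carrier_vec k" "xs ! j \<in> carrier_vec k" using xs i j by auto
    then show ?thesis using i j unfolding bform_def by simp
  qed
  finally show ?thesis .
qed

lemma bform_congruence:
  assumes B: "B \<in> carrier_mat k k" and P: "P \<in> carrier_mat k k"
    and u: "u \<in> carrier_vec k" and v: "v \<in> carrier_vec k"
  shows "bform B (P *\<^sub>v u) (P *\<^sub>v v) = bform (transpose_mat P * B * P) u v"
proof -
  have PT: "transpose_mat P \<in> carrier_mat k k" using P by simp
  have PTB: "transpose_mat P * B \<in> carrier_mat k k" using PT B by simp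
  have "(transpose_mat P * B * P) *\<^sub>v v = (transpose_mat P * B) *\<^sub>v (P *\<^sub>v v)"
    by (rule assoc_mult_mat_vec[OF PTB P v])
  also have "\<dots> = transpose_mat P *\<^sub>v (B *\<^sub>v (P *\<^sub>v v))"
    by (rule assoc_mult_mat_vec[OF PT B]) (use P v in simp)
  finally have "(transpose_mat P * B * P) *\<^sub>v v = transpose_mat P *\<^sub>v (B *\<^sub>v (P *\<^sub>v v))" .
  then have "bform (transpose_mat P * B * P) u v = u \<bullet> (transpose_mat P *\<^sub>v (B *\<^sub>v (P *\<^sub>v v)))"
    unfolding bform_def by simp
  also have "\<dots> = (transpose_mat P *\<^sub>v (B *\<^sub>v (P *\<^sub>v v))) \<bullet> u"
    using u P B v by (intro comm_scalar_prod[of _ k]) simp_all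
  also have "\<dots> = (B *\<^sub>v (P *\<^sub>v v)) \<bullet> (P *\<^sub>v u)"
    by (rule transpose_vec_mult_scalar[OF P u]) (use B P v in simp)
  also have "\<dots> = (P *\<^sub>v u) \<bullet> (B *\<^sub>v (P *\<^sub>v v))"
    using u P B v by (intro comm_scalar_prod[of _ k]) simp_all
  finally show ?thesis unfolding bform_def by simp
qed


lemma equiv_dform_scale:
  assumes t: "(t::'a::field) \<noteq> 0"
  shows "equiv_forms k (dform k d) (dform k (\<lambda>i. t * d i))"
proof (rule equiv_formsI[OF scalar_map_id, of "inverse t"])
  fix u v :: "'a vec"
  show "dform k d (id u) (id v) = inverse t * dform k (\<lambda>i. t * d i) u v"
    unfolding dform_def sum_distrib_left using t by (intro sum.cong refl) (simp add: field_simps)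
qed (use t in simp)

lemma equiv_dform_square:
  assumes j: "j < k" and s: "(s::'a::field) \<noteq> 0"
  shows "equiv_forms k (dform k d) (dform k (d(j := s * s * d j)))"
proof -
  define S where "S u = vec k (\<lambda>i. if i = j then s * u $ i else u $ i)" for u :: "'a vec"
  have "inj_on S (carrier_vec k)"
  proof
    fix u v assume u: "u \<in> carrier_vec k" and v: "v \<in> carrier_vec k" and e: "S u = S v"
    show "u = v"
    proof (rule eq_vecI)
      fix i assume i: "i < dim_vec v"
      have "S u $ i = S v $ i" using e by simp
      then show "u $ i = v $ i" using i v s unfolding S_def by (auto split: if_splits)
    qed (use u v in simp)
  qed
  then have "scalar_map k S" unfolding scalar_map_def S_def by (auto intro!: eq_vecI simp: ac_simps)
  then show ?thesis
    by (rule equiv_formsI[of _ _ 1]) (auto simp: dform_def S_def ac_simps intro!: sum.cong)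
qed

lemma sum_split_two:
  assumes "j < (k::nat)" "l < k" "j \<noteq> l"
  shows "(\<Sum>i<k. f i) = f j + f l + (\<Sum>i\<in>{..<k} - {j, l}. f i)"
proof -
  have "(\<Sum>i<k. f i) = f j + (\<Sum>i\<in>{..<k} - {j}. f i)" using assms by (intro sum.remove) auto
  also have "(\<Sum>i\<in>{..<k} - {j}. f i) = f l + (\<Sum>i\<in>{..<k} - {j} - {l}. f i)"
    using assms by (intro sum.remove) auto
  also have "{..<k} - {j} - {l} = {..<k} - {j, l}" by auto
  finally show ?thesis by (simp add: add.assoc)
qed

text \<open>The change of variables used to merge two coefficients a = d j and b = d l when
  a x^2 + b y^2 = 1: it is invertible, with inverse given by the transposed formulas.\<close>
definition merge_map :: "nat \<Rightarrow> nat \<Rightarrow> nat \<Rightarrow> 'a \<Rightarrow> 'a \<Rightarrow> 'a \<Rightarrow> 'a \<Rightarrow> 'a::comm_ring vec \<Rightarrow> 'a vec" where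
  "merge_map k j l a b x y u = vec k (\<lambda>i. if i = j then x * u $ j - b * y * u $ l
     else if i = l then y * u $ j + a * x * u $ l else u $ i)"

lemma merge_map_scalar_map:
  assumes j: "j < k" and l: "l < k" and jl: "j \<noteq> l" and h: "a * (x * x) + b * (y * y) = (1::'a::field)"
  shows "scalar_map k (merge_map k j l a b x y)"
proof -
  let ?S = "merge_map k j l a b x y"
  define T where "T u = vec k (\<lambda>i. if i = j then a * x * u $ j + b * y * u $ l
     else if i = l then - y * u $ j + x * u $ l else u $ i)" for u :: "'a vec"
  have "T (?S u) = u" if u: "u \<in> carrier_vec k" for u
  proof (rule eq_vecI)
    fix i assume "i < dim_vec u"
    have "a * x * (x * p - b * y * r) + b * y * (y * p + a * x * r) = p * (a * (x * x) + b * (y * y))"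
      "- y * (x * p - b * y * r) + x * (y * p + a * x * r) = r * (a * (x * x) + b * (y * y))" for p r
      by (simp_all add: algebra_simps)
    then show "T (?S u) $ i = u $ i"
      using \<open>i < dim_vec u\<close> u h j l jl unfolding T_def merge_map_def by auto
  qed (use u in \<open>simp add: T_def\<close>)
  then have "inj_on ?S (carrier_vec k)" by (metis inj_on_inverseI)
  then show ?thesis unfolding scalar_map_def merge_map_def
    using j l by (auto intro!: eq_vecI simp: algebra_simps)
qed

lemma equiv_dform_merge:
  assumes j: "j < k" and l: "l < k" and jl: "j \<noteq> l"
    and h: "d j * (x * x) + d l * (y * y) = (1::'a::field)"
  shows "equiv_forms k (dform k d) (dform k (d(j := 1, l := d j * d l)))"
proof (rule equiv_formsI[OF merge_map_scalar_map[OF j l jl h], of 1])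
  fix u v :: "'a vec"
  let ?S = "merge_map k j l (d j) (d l) x y" and ?d' = "d(j := 1, l := d j * d l)"
  have Sj: "?S w $ j = x * w $ j - d l * y * w $ l" and Sl: "?S w $ l = y * w $ j + d j * x * w $ l"
    and So: "\<And>i. i < k \<Longrightarrow> i \<noteq> j \<Longrightarrow> i \<noteq> l \<Longrightarrow> ?S w $ i = w $ i" for w
    unfolding merge_map_def using j l jl by simp_all
  have "d j * ?S u $ j * ?S v $ j + d l * ?S u $ l * ?S v $ l =
     (u $ j * v $ j + d j * d l * (u $ l * v $ l)) * (d j * (x * x) + d l * (y * y))"
    unfolding Sj Sl by (simp add: algebra_simps)
  then have two: "d j * ?S u $ j * ?S v $ j + d l * ?S u $ l * ?S v $ l
      = ?d' j * u $ j * v $ j + ?d' l * u $ l * v $ l" using h jl by simp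
  have rest: "(\<Sum>i\<in>{..<k} - {j, l}. d i * ?S u $ i * ?S v $ i) = (\<Sum>i\<in>{..<k} - {j, l}. ?d' i * u $ i * v $ i)"
    by (intro sum.cong refl) (auto simp: So)
  show "dform k d (?S u) (?S v) = 1 * dform k ?d' u v"
    unfolding dform_def sum_split_two[OF j l jl, of "\<lambda>i. d i * ?S u $ i * ?S v $ i"]
      sum_split_two[OF j l jl, of "\<lambda>i. ?d' i * u $ i * v $ i"] rest two by simp
qed simp


section \<open>Normal form of a diagonal form: only the discriminant matters\<close>

definition canon :: "nat \<Rightarrow> 'a::one \<Rightarrow> nat \<Rightarrow> 'a" where
  "canon k p = (\<lambda>i. if i = k - 1 then p else 1)"

text \<open>Over a field of odd order, merging coefficients one at a time into the last one brings
  every nondegenerate diagonal form to canonical shape with the same determinant.\<close>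
lemma equiv_dform_canon:
  assumes odd_card: "odd (card (UNIV::'a::{finite,field} set))"
    and k: "k \<ge> 1" and d: "\<forall>i<k. (d i :: 'a) \<noteq> 0"
  shows "equiv_forms k (dform k d) (dform k (canon k (\<Prod>i<k. d i)))"
proof -
  define D where "D r = (\<lambda>i. if i < r then 1 else if i = k - 1 then (\<Prod>i<r. d i) * d (k - 1) else d i)" for r
  have step: "equiv_forms k (dform k d) (dform k (D r))" if "r \<le> k - 1" for r
    using that
  proof (induction r)
    case 0
    have "D 0 = d" unfolding D_def by auto
    then show ?case by (simp add: equiv_forms_refl)
  next
    case (Suc r)
    then have r: "r < k - 1" by simp
    have Dr: "D r r = d r" and Dl: "D r (k - 1) = (\<Prod>i<r. d i) * d (k - 1)"
      using r unfolding D_def by simp_all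
    have "D r r \<noteq> 0" "D r (k - 1) \<noteq> 0" using Dr Dl d r k by simp_all
    then obtain x y where "D r r * (x * x) + D r (k - 1) * (y * y) = 1"
      using binary_form_represents[OF odd_card] by blast
    then have "equiv_forms k (dform k (D r)) (dform k ((D r)(r := 1, k - 1 := D r r * D r (k - 1))))"
      by (rule equiv_dform_merge[rotated 3]) (use r in auto)
    moreover have "(D r)(r := 1, k - 1 := D r r * D r (k - 1)) = D (Suc r)"
      unfolding Dr Dl using r unfolding D_def by (auto simp: fun_eq_iff ac_simps)
    ultimately show ?case using equiv_forms_trans Suc by simp
  qed
  obtain k' where "k = Suc k'" using k by (cases k) auto
  then have "(\<Prod>i<k. d i) = (\<Prod>i<k - 1. d i) * d (k - 1)" by simp
  then have "dform k (D (k - 1)) = dform k (canon k (\<Prod>i<k. d i))"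
    by (intro dform_cong) (auto simp: D_def canon_def)
  then show ?thesis using step[of "k - 1"] by simp
qed

lemma equiv_canon_square:
  assumes k: "k \<ge> 1" and t: "(t::'a::field) \<noteq> 0"
  shows "equiv_forms k (dform k (canon k a)) (dform k (canon k (a * (t * t))))"
proof -
  have "equiv_forms k (dform k (canon k a)) (dform k ((canon k a)(k - 1 := t * t * canon k a (k - 1))))"
    by (rule equiv_dform_square) (use k t in auto)
  moreover have "(canon k a)(k - 1 := t * t * canon k a (k - 1)) = canon k (a * (t * t))"
    unfolding canon_def by (auto simp: ac_simps)
  ultimately show ?thesis by simp
qed

lemma equiv_dform_discriminant:
  assumes odd_card: "odd (card (UNIV::'a::{finite,field} set))" and k: "k \<ge> 1"
    and d: "\<forall>i<k. (d i :: 'a) \<noteq> 0" and d': "\<forall>i<k. d' i \<noteq> 0" and t: "t \<noteq> 0"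
    and disc: "(\<Prod>i<k. d i) = (\<Prod>i<k. d' i) * (t * t)"
  shows "equiv_forms k (dform k d) (dform k d')"
proof -
  have "equiv_forms k (dform k d') (dform k (canon k (\<Prod>i<k. d i)))"
    using equiv_forms_trans[OF equiv_dform_canon[OF odd_card k d'] equiv_canon_square[OF k t]] disc
    by simp
  then show ?thesis using equiv_forms_trans[OF equiv_dform_canon[OF odd_card k d]] equiv_forms_sym
    by blast
qed


section \<open>Diagonalization of nondegenerate symmetric forms\<close>

text \<open>A nondegenerate symmetric bilinear form over a finite field of odd order has an
  orthogonal basis, built one vector at a time: the orthogonal complement of the vectors found so
  far contains an anisotropic vector.\<close>
locale nondeg_sym_form =
  fixes B :: "'a::{finite,field} mat" and k :: nat
  assumes odd_card: "odd (card (UNIV::'a set))"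
    and B: "B \<in> carrier_mat k k" and symB: "transpose_mat B = B" and invB: "invertible_mat B"
begin

abbreviation V where "V \<equiv> carrier_vec k :: 'a vec set"
abbreviation \<beta> where "\<beta> \<equiv> bform B"

lemma sym: "u \<in> V \<Longrightarrow> v \<in> V \<Longrightarrow> \<beta> u v = \<beta> v u"
proof -
  assume u: "u \<in> V" and v: "v \<in> V"
  have "(transpose_mat B *\<^sub>v u) \<bullet> v = u \<bullet> (B *\<^sub>v v)" by (rule transpose_vec_mult_scalar[OF B v u])
  moreover have "(B *\<^sub>v u) \<bullet> v = v \<bullet> (B *\<^sub>v u)" using u v B by (intro comm_scalar_prod[of _ k]) simp_all
  ultimately show ?thesis unfolding bform_def symB by simp
qed

lemma add_left: "u \<in> V \<Longrightarrow> v \<in> V \<Longrightarrow> w \<in> V \<Longrightarrow> \<beta> (u + v) w = \<beta> u w + \<beta> v w"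
  unfolding bform_def by (rule add_scalar_prod_distrib) (use B in auto)

lemma add_right: "u \<in> V \<Longrightarrow> v \<in> V \<Longrightarrow> w \<in> V \<Longrightarrow> \<beta> w (u + v) = \<beta> w u + \<beta> w v"
  using add_left sym by simp

lemma diff_right: "u \<in> V \<Longrightarrow> v \<in> V \<Longrightarrow> w \<in> V \<Longrightarrow> \<beta> w (u - v) = \<beta> w u - \<beta> w v"
proof -
  assume "u \<in> V" "v \<in> V" "w \<in> V"
  then have "\<beta> (u - v) w = \<beta> u w - \<beta> v w"
    unfolding bform_def by (intro minus_scalar_prod_distrib) (use B in auto)
  then show ?thesis using sym \<open>u \<in> V\<close> \<open>v \<in> V\<close> \<open>w \<in> V\<close> by simp
qed

lemma smult_right: "u \<in> V \<Longrightarrow> w \<in> V \<Longrightarrow> \<beta> w (a \<cdot>\<^sub>v u) = a * \<beta> w u"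
  unfolding bform_def using B by (simp add: mult_mat_vec[of B k k])

text \<open>Nondegeneracy: a nonzero vector pairs nontrivially with some vector (a unit vector),
  because B w is nonzero when B is invertible.\<close>
lemma nondegenerate:
  assumes w: "w \<in> V" "w \<noteq> 0\<^sub>v k"
  shows "\<exists>v\<in>V. \<beta> w v \<noteq> 0"
proof -
  obtain C where C: "inverts_mat B C" "inverts_mat C B" using invB unfolding invertible_mat_def by blast
  have BC: "B * C = 1\<^sub>m k" using C(1) B unfolding inverts_mat_def by simp
  have dC: "dim_col C = k" using arg_cong[OF BC, of dim_col] by simp
  have CB0: "C * B = 1\<^sub>m (dim_row C)" using C(2) unfolding inverts_mat_def by simp
  have dR: "dim_row C = k" using arg_cong[OF CB0, of dim_col] B by simp
  have CB: "C * B = 1\<^sub>m k" using CB0 dR by simp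
  have Cc: "C \<in> carrier_mat k k" using dR dC by auto
  have "B *\<^sub>v w \<noteq> 0\<^sub>v k"
  proof
    assume h: "B *\<^sub>v w = 0\<^sub>v k"
    have "w = (C * B) *\<^sub>v w" unfolding CB using w by simp
    also have "\<dots> = C *\<^sub>v (B *\<^sub>v w)" using Cc B w by simp
    also have "\<dots> = 0\<^sub>v k" unfolding h using Cc by (intro eq_vecI) auto
    finally show False using w by simp
  qed
  moreover have "B *\<^sub>v w \<in> V" using B w by simp
  ultimately obtain i where i: "i < k" "(B *\<^sub>v w) $ i \<noteq> 0"
    using nonzero_vec_coord[of "B *\<^sub>v w" k] by blast
  have "\<beta> (unit_vec k i) w \<noteq> 0" unfolding bform_def using i B w by simp
  then show ?thesis using sym[of "unit_vec k i" w] w by (intro bexI[of _ "unit_vec k i"]) simp_all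
qed

fun orthogonal :: "'a vec list \<Rightarrow> bool" where
  "orthogonal [] = True"
| "orthogonal (e # es) = (\<beta> e e \<noteq> 0 \<and> (\<forall>e'\<in>set es. \<beta> e e' = 0) \<and> orthogonal es)"

fun orth_proj :: "'a vec list \<Rightarrow> 'a vec \<Rightarrow> 'a vec" where
  "orth_proj [] v = v"
| "orth_proj (e # es) v = orth_proj es v - (\<beta> e (orth_proj es v) / \<beta> e e) \<cdot>\<^sub>v e"

lemma orth_proj_carrier: "set es \<subseteq> V \<Longrightarrow> v \<in> V \<Longrightarrow> orth_proj es v \<in> V"
  by (induction es) auto

lemma orth_proj_orthogonal:
  "set es \<subseteq> V \<Longrightarrow> orthogonal es \<Longrightarrow> v \<in> V \<Longrightarrow> \<forall>e\<in>set es. \<beta> e (orth_proj es v) = 0"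
proof (induction es)
  case Nil then show ?case by simp
next
  case (Cons e es)
  let ?p = "orth_proj es v"
  let ?c = "\<beta> e ?p / \<beta> e e"
  have eV: "e \<in> V" and esV: "set es \<subseteq> V" using Cons.prems by auto
  have pV: "?p \<in> V" using orth_proj_carrier[OF esV Cons.prems(3)] .
  have "\<beta> e (?p - ?c \<cdot>\<^sub>v e) = \<beta> e ?p - ?c * \<beta> e e" using eV pV by (simp add: diff_right smult_right)
  then have "\<beta> e (orth_proj (e # es) v) = 0" using Cons.prems by simp
  moreover have "\<beta> e' (orth_proj (e # es) v) = 0" if e': "e' \<in> set es" for e'
  proof -
    have e'V: "e' \<in> V" using e' esV by auto
    have "\<beta> e' e = 0" using sym[OF e'V eV] Cons.prems e' by simp
    moreover have "\<beta> e' (?p - ?c \<cdot>\<^sub>v e) = \<beta> e' ?p - ?c * \<beta> e' e"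
      using eV pV e'V by (simp add: diff_right smult_right)
    ultimately show ?thesis using Cons e' by simp
  qed
  ultimately show ?case by simp
qed

lemma orth_proj_pairing:
  "set es \<subseteq> V \<Longrightarrow> v \<in> V \<Longrightarrow> w \<in> V \<Longrightarrow> \<forall>e\<in>set es. \<beta> w e = 0 \<Longrightarrow> \<beta> w (orth_proj es v) = \<beta> w v"
proof (induction es)
  case (Cons e es)
  have "e \<in> V" "orth_proj es v \<in> V" using Cons.prems orth_proj_carrier by auto
  then show ?case using Cons by (simp add: diff_right smult_right)
qed simp

text \<open>Fewer than k linear conditions have a common nonzero solution, by counting: the map
  v \<mapsto> (\<beta>(e_a, v))_a cannot be injective on the q^k vectors.\<close>
lemma exists_orthogonal_vector:
  assumes esV: "set es \<subseteq> V" and len: "length es < k"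
  shows "\<exists>w\<in>V. w \<noteq> 0\<^sub>v k \<and> (\<forall>e\<in>set es. \<beta> e w = 0)"
proof -
  let ?j = "length es"
  let ?f = "\<lambda>v. restrict (\<lambda>a. \<beta> (es ! a) v) {0..<?j}"
  have "card (?f ` V) \<le> card (PiE {0..<?j} (\<lambda>_. UNIV :: 'a set))"
    by (rule card_mono) (auto simp: finite_PiE)
  also have "\<dots> = card (UNIV::'a set) ^ ?j" by (simp add: card_PiE)
  also have "\<dots> < card (UNIV::'a set) ^ k"
    using card_field_ge_2[where 'a='a] len by (intro power_strict_increasing) auto
  also have "\<dots> = card V" by (simp add: card_carrier_vec)
  finally have "\<not> inj_on ?f V" using card_image by fastforce
  then obtain u v where uv: "u \<in> V" "v \<in> V" "u \<noteq> v" "?f u = ?f v" unfolding inj_on_def by blast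
  have "u - v \<noteq> 0\<^sub>v k"
  proof
    assume w0: "u - v = 0\<^sub>v k"
    have "u = v"
    proof (rule eq_vecI)
      fix i assume i: "i < dim_vec v"
      have "(u - v) $ i = 0" using w0 i uv by simp
      then show "u $ i = v $ i" using i uv by simp
    qed (use uv in simp)
    then show False using uv by simp
  qed
  moreover have "\<beta> e (u - v) = 0" if e: "e \<in> set es" for e
  proof -
    obtain a where a: "a < ?j" "e = es ! a" using e by (auto simp: in_set_conv_nth)
    have "\<beta> (es ! a) u = \<beta> (es ! a) v" using fun_cong[OF uv(4), of a] a by simp
    then show ?thesis using uv esV e a by (simp add: diff_right subset_iff)
  qed
  ultimately show ?thesis using uv by (intro bexI[of _ "u - v"]) auto
qed

text \<open>The inductive step: the orthogonal complement of es contains a nonzero w0; if w0 is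
  isotropic, pair it with the projection v' of a vector v with \<beta>(w0, v) \<noteq> 0; then one of
  w0, v', w0 + v' is anisotropic since \<beta>(w0 + v', w0 + v') = 2 \<beta>(w0, v') when both are
  isotropic, and 2 \<noteq> 0.\<close>
lemma exists_anisotropic_orthogonal:
  assumes esV: "set es \<subseteq> V" and es: "orthogonal es" and len: "length es < k"
  shows "\<exists>w\<in>V. \<beta> w w \<noteq> 0 \<and> (\<forall>e\<in>set es. \<beta> e w = 0)"
proof -
  obtain w0 where w0: "w0 \<in> V" "w0 \<noteq> 0\<^sub>v k" "\<forall>e\<in>set es. \<beta> e w0 = 0"
    using exists_orthogonal_vector[OF esV len] by blast
  obtain v where v: "v \<in> V" "\<beta> w0 v \<noteq> 0" using nondegenerate[OF w0(1,2)] by blast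
  let ?v' = "orth_proj es v"
  have v'V: "?v' \<in> V" and v'e: "\<forall>e\<in>set es. \<beta> e ?v' = 0"
    using orth_proj_carrier[OF esV v(1)] orth_proj_orthogonal[OF esV es v(1)] by auto
  have "\<forall>e\<in>set es. \<beta> w0 e = 0" using w0 esV sym by auto
  then have wv': "\<beta> w0 ?v' \<noteq> 0" using orth_proj_pairing[OF esV v(1) w0(1)] v(2) by simp
  consider "\<beta> w0 w0 \<noteq> 0" | "\<beta> ?v' ?v' \<noteq> 0" | "\<beta> w0 w0 = 0" "\<beta> ?v' ?v' = 0" by blast
  then show ?thesis
  proof cases
    case 3
    have "\<beta> (w0 + ?v') (w0 + ?v') = \<beta> w0 w0 + \<beta> w0 ?v' + (\<beta> ?v' w0 + \<beta> ?v' ?v')"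
      using w0(1) v'V by (simp add: add_left add_right)
    also have "\<dots> = 2 * \<beta> w0 ?v'" using 3 sym[OF w0(1) v'V] by simp
    finally have "\<beta> (w0 + ?v') (w0 + ?v') \<noteq> 0" using wv' two_neq_zero[OF odd_card] by simp
    moreover have "\<forall>e\<in>set es. \<beta> e (w0 + ?v') = 0" using w0 v'e v'V esV by (auto simp: add_right)
    ultimately show ?thesis using w0(1) v'V by (intro bexI[of _ "w0 + ?v'"]) auto
  qed (use w0 v'V v'e in blast)+
qed

lemma orthogonal_basis: "j \<le> k \<Longrightarrow> \<exists>es. length es = j \<and> set es \<subseteq> V \<and> orthogonal es"
proof (induction j)
  case 0 then show ?case by (intro exI[of _ "[]"]) simp
next
  case (Suc j)
  then obtain es where es: "length es = j" "set es \<subseteq> V" "orthogonal es" by auto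
  obtain w where w: "w \<in> V" "\<beta> w w \<noteq> 0" "\<forall>e\<in>set es. \<beta> e w = 0"
    using exists_anisotropic_orthogonal[OF es(2,3)] es(1) Suc.prems by auto
  have "\<forall>e\<in>set es. \<beta> w e = 0" using w es(2) sym by auto
  then show ?case using w es by (intro exI[of _ "w # es"]) simp
qed

lemma orthogonal_nth:
  assumes "orthogonal es" "set es \<subseteq> V" "a < length es" "b < length es"
  shows "\<beta> (es ! a) (es ! b) = (if a = b then \<beta> (es ! a) (es ! a) else 0) \<and> \<beta> (es ! a) (es ! a) \<noteq> 0"
  using assms
proof (induction es arbitrary: a b)
  case (Cons e es)
  have eV: "e \<in> V" and esV: "set es \<subseteq> V" using Cons.prems by auto
  show ?case
  proof (cases a)
    case 0
    then show ?thesis using Cons.prems by (cases b) auto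
  next
    case (Suc a')
    show ?thesis
    proof (cases b)
      case 0
      have "es ! a' \<in> set es" using Suc Cons.prems by simp
      then have "\<beta> (es ! a') e = 0" using sym eV esV Cons.prems by auto
      then show ?thesis using Cons.IH[of a' a'] Cons.prems Suc 0 by simp
    next
      case (Suc b')
      then show ?thesis using Cons.IH[of a' b'] Cons.prems \<open>a = Suc a'\<close> by simp
    qed
  qed
qed simp

text \<open>Every nondegenerate symmetric form is equivalent to a nondegenerate diagonal form: the
  matrix P with the orthogonal basis as columns satisfies P^t B P = diag(d).\<close>
lemma diagonalization: "\<exists>d. (\<forall>i<k. d i \<noteq> 0) \<and> equiv_forms k \<beta> (dform k d)"
proof -
  obtain es where es: "length es = k" "set es \<subseteq> V" "orthogonal es" using orthogonal_basis[of k] by auto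
  define d where "d i = \<beta> (es ! i) (es ! i)" for i
  let ?P = "mat_of_cols k es"
  have P: "?P \<in> carrier_mat k k" using es(1) mat_of_cols_carrier(1)[of k es] by simp
  have M: "transpose_mat ?P * B * ?P = mat_diag k d"
  proof (rule eq_matI)
    fix i j assume "i < dim_row (mat_diag k d)" "j < dim_col (mat_diag k d)"
    then have i: "i < length es" and j: "j < length es" using es(1) by simp_all
    show "(transpose_mat ?P * B * ?P) $$ (i, j) = mat_diag k d $$ (i, j)"
      unfolding congruence_entry[OF es(2) B i j] using orthogonal_nth[OF es(3) es(2) i j] i j es(1)
      unfolding mat_diag_def d_def by simp
  qed (use es B in simp_all)
  have dnz: "\<forall>i<k. d i \<noteq> 0" using orthogonal_nth[OF es(3) es(2)] es(1) unfolding d_def by blast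
  have form: "\<beta> (?P *\<^sub>v u) (?P *\<^sub>v v) = dform k d u v" if "u \<in> V" "v \<in> V" for u v
    using bform_congruence[OF B P that] M bform_mat_diag[OF that] by simp
  have "inj_on (\<lambda>u. ?P *\<^sub>v u) V"
  proof
    fix u v assume u: "u \<in> V" and v: "v \<in> V" and e: "?P *\<^sub>v u = ?P *\<^sub>v v"
    show "u = v"
    proof (rule eq_vecI)
      fix i assume "i < dim_vec v"
      then have i: "i < k" using v by simp
      have "dform k d (unit_vec k i) u = dform k d (unit_vec k i) v"
        using form[OF _ u] form[OF _ v] e by (metis unit_vec_carrier)
      then have "d i * u $ i = d i * v $ i" using i by (simp add: dform_unit_vec)
      then show "u $ i = v $ i" using dnz i by simp
    qed (use u v in simp)
  qed
  then have "scalar_map k (\<lambda>u. ?P *\<^sub>v u)"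
    unfolding scalar_map_def using P by (auto intro: mult_mat_vec)
  then have "equiv_forms k \<beta> (dform k d)" by (rule equiv_formsI[of _ _ 1]) (simp_all add: form)
  then show ?thesis using dnz by blast
qed

end


section \<open>Counting isotropic vectors of diagonal forms\<close>

text \<open>For the recursion it is convenient to represent vectors of length n by functions on the
  naturals vanishing from n on.\<close>
definition trunc_funs :: "nat \<Rightarrow> (nat \<Rightarrow> 'a::zero) set" where
  "trunc_funs n = {f. \<forall>i\<ge>n. f i = 0}"

definition diag_quad :: "nat \<Rightarrow> (nat \<Rightarrow> 'a::comm_ring) \<Rightarrow> (nat \<Rightarrow> 'a) \<Rightarrow> 'a" where
  "diag_quad n d f = (\<Sum>i<n. d i * f i * f i)"

definition isotropic_count :: "nat \<Rightarrow> (nat \<Rightarrow> 'a::comm_ring) \<Rightarrow> nat" where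
  "isotropic_count n d = card {f \<in> trunc_funs n. diag_quad n d f = 0}"

lemma bij_vec_trunc_funs: "bij_betw (vec n) (trunc_funs n :: (nat \<Rightarrow> 'a::zero) set) (carrier_vec n)"
proof (rule bij_betw_byWitness[where f' = "\<lambda>v i. if i < n then v $ i else 0"])
  show "\<forall>f\<in>trunc_funs n. (\<lambda>i. if i < n then vec n f $ i else 0) = (f :: nat \<Rightarrow> 'a)"
    by (auto simp: trunc_funs_def fun_eq_iff)
  show "\<forall>v\<in>carrier_vec n. vec n (\<lambda>i. if i < n then v $ i else 0) = (v :: 'a vec)"
    by (auto intro!: eq_vecI)
  show "(\<lambda>v i. if i < n then v $ i else 0) ` carrier_vec n \<subseteq> (trunc_funs n :: (nat \<Rightarrow> 'a) set)"
    by (auto simp: trunc_funs_def)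
qed auto

lemma card_trunc_funs: "card (trunc_funs n :: (nat \<Rightarrow> 'a::{finite,zero}) set) = card (UNIV::'a set) ^ n"
  using bij_betw_same_card[OF bij_vec_trunc_funs[where 'a='a]] by (simp add: card_carrier_vec)

lemma finite_trunc_funs [simp]: "finite (trunc_funs n :: (nat \<Rightarrow> 'a::{finite,zero}) set)"
  using bij_betw_finite[OF bij_vec_trunc_funs[where 'a='a]] by simp

lemma dform_vec: "dform n d (vec n f) (vec n f) = diag_quad n d f"
  unfolding dform_def diag_quad_def by (intro sum.cong) auto

lemma isotropic_count_vec:
  "card {v \<in> carrier_vec n. dform n d v v = 0} = isotropic_count n (d :: nat \<Rightarrow> 'a::field)"
proof -
  have "vec n ` {f \<in> trunc_funs n. diag_quad n d f = 0} = {v \<in> carrier_vec n. dform n d v v = 0}"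
  proof
    show "vec n ` {f \<in> trunc_funs n. diag_quad n d f = 0} \<subseteq> {v \<in> carrier_vec n. dform n d v v = 0}"
      by (auto simp: dform_vec)
    show "{v \<in> carrier_vec n. dform n d v v = 0} \<subseteq> vec n ` {f \<in> trunc_funs n. diag_quad n d f = 0}"
    proof
      fix v :: "'a vec" assume v: "v \<in> {v \<in> carrier_vec n. dform n d v v = 0}"
      then have "v \<in> vec n ` trunc_funs n" using bij_betw_imp_surj_on[OF bij_vec_trunc_funs] by auto
      then obtain f where "f \<in> trunc_funs n" "v = vec n f" by blast
      then show "v \<in> vec n ` {f \<in> trunc_funs n. diag_quad n d f = 0}" using v by (auto simp: dform_vec)
    qed
  qed
  then have "bij_betw (vec n) {f \<in> trunc_funs n. diag_quad n d f = 0} {v \<in> carrier_vec n. dform n d v v = 0}"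
    by (intro bij_betw_subset[OF bij_vec_trunc_funs]) auto
  then show ?thesis unfolding isotropic_count_def by (simp add: bij_betw_same_card)
qed

lemma diag_quad_cong: "(\<And>i. i < n \<Longrightarrow> f i = g i) \<Longrightarrow> diag_quad n d f = diag_quad n d g"
  unfolding diag_quad_def by (intro sum.cong) auto

lemma diag_quad_Suc2:
  "diag_quad (Suc (Suc n)) d f = diag_quad n d f + d n * f n * f n + d (Suc n) * f (Suc n) * f (Suc n)"
  unfolding diag_quad_def by (simp add: add.assoc)

lemma isotropic_count_anisotropic:
  assumes "\<And>f. f \<in> trunc_funs n \<Longrightarrow> diag_quad n d f = 0 \<Longrightarrow> \<forall>i<n. f i = 0"
  shows "isotropic_count n d = 1"
proof -
  have "{f \<in> trunc_funs n. diag_quad n d f = 0} = {\<lambda>_. 0}"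
  proof
    show "{f \<in> trunc_funs n. diag_quad n d f = 0} \<subseteq> {\<lambda>_. 0}"
    proof
      fix f assume f: "f \<in> {f \<in> trunc_funs n. diag_quad n d f = 0}"
      then have "f i = 0" for i using assms[of f] unfolding trunc_funs_def by (cases "i < n") auto
      then show "f \<in> {\<lambda>_. 0}" by auto
    qed
  qed (auto simp: trunc_funs_def diag_quad_def)
  then show ?thesis unfolding isotropic_count_def by simp
qed

lemma diag_quad_hyperbolic:
  assumes d: "d n = 1" "d (Suc n) = (-1::'a::comm_ring_1)"
  shows "diag_quad (Suc (Suc n)) d f
    = diag_quad n d (\<lambda>i. if i < n then f i else 0) + (f n + f (Suc n)) * (f n - f (Suc n))"
proof -
  have "diag_quad n d (\<lambda>i. if i < n then f i else 0) = diag_quad n d f" by (rule diag_quad_cong) simp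
  then show ?thesis unfolding diag_quad_Suc2 d by (simp add: algebra_simps)
qed

text \<open>The inverse change of variables x = (u + w)/2, y = (u - w)/2, available when 2 \<noteq> 0.\<close>
lemma half_sum_diff:
  fixes u w :: "'a::field"
  assumes two: "(2::'a) \<noteq> 0"
  shows "(u + w) / 2 + (u - w) / 2 = u" "(u + w) / 2 - (u - w) / 2 = w"
    "(u + w) / 2 * ((u + w) / 2) - (u - w) / 2 * ((u - w) / 2) = u * w"
proof -
  have half: "2 * (x / 2) = x" for x :: 'a using two by simp
  show "(u + w) / 2 + (u - w) / 2 = u" using two by (simp add: field_simps)
  have "2 * ((u + w) / 2 - (u - w) / 2) = 2 * ((u + w) / 2) - 2 * ((u - w) / 2)"
    by (rule right_diff_distrib)
  also have "\<dots> = 2 * w" unfolding half by simp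
  finally show "(u + w) / 2 - (u - w) / 2 = w" using mult_left_cancel[OF two] by blast
  have "(u + w) / 2 * ((u + w) / 2) - (u - w) / 2 * ((u - w) / 2) = ((u + w) * (u + w) - (u - w) * (u - w)) / (2 * 2)"
    by (simp add: field_simps)
  also have "(u + w) * (u + w) - (u - w) * (u - w) = (2 * 2) * (u * w)" by (simp add: algebra_simps)
  moreover have "(4::'a) \<noteq> 0" using no_zero_divisors[OF two two] by simp
  ultimately show "(u + w) / 2 * ((u + w) / 2) - (u - w) / 2 * ((u - w) / 2) = u * w" by simp
qed

text \<open>Adjoining a hyperbolic plane x^2 - y^2 = (x + y)(x - y): the invertible change of
  variables u = x + y, w = x - y turns the zeros of Q(g) + x^2 - y^2 into the solutions of
  Q(g) + u w = 0.\<close>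
lemma hyperbolic_change_of_variables:
  assumes odd_card: "odd (card (UNIV::'a::{finite,field} set))"
    and d: "d n = (1::'a)" "d (Suc n) = -1"
  shows "isotropic_count (Suc (Suc n)) d =
    card {(g, u, w). g \<in> trunc_funs n \<and> diag_quad n d g + u * w = (0::'a)}"
proof -
  let ?A = "{f \<in> trunc_funs (Suc (Suc n)). diag_quad (Suc (Suc n)) d f = 0}"
  let ?T = "{(g, u, w). g \<in> trunc_funs n \<and> diag_quad n d g + u * w = (0::'a)}"
  let ?r = "\<lambda>f::nat \<Rightarrow> 'a. \<lambda>i. if i < n then f i else 0"
  define \<phi> where "\<phi> f = (?r f, f n + f (Suc n), f n - f (Suc n))" for f
  define \<psi> where "\<psi> t = (case t of (g, u, w) \<Rightarrow> (g::nat \<Rightarrow> 'a)(n := (u + w) / 2, Suc n := (u - w) / 2))"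
    for t :: "(nat \<Rightarrow> 'a) \<times> 'a \<times> 'a"
  have \<psi>: "\<psi> (g, u, w) = g(n := (u + w) / 2, Suc n := (u - w) / 2)" for g u w
    unfolding \<psi>_def by simp
  note halves = half_sum_diff[OF two_neq_zero[OF odd_card]]
  note Q = diag_quad_hyperbolic[OF d]
  have "bij_betw \<phi> ?A ?T"
  proof (rule bij_betw_byWitness[where f' = \<psi>])
    show "\<forall>f\<in>?A. \<psi> (\<phi> f) = f"
    proof
      fix f assume "f \<in> ?A"
      then have "f i = 0" if "i \<ge> Suc (Suc n)" for i using that unfolding trunc_funs_def by auto
      then show "\<psi> (\<phi> f) = f" unfolding \<phi>_def \<psi>_def using halves(1,2)[of "f n" "f (Suc n)"]
        by (auto simp: fun_eq_iff)
    qed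
    show "\<forall>t\<in>?T. \<phi> (\<psi> t) = t"
    proof
      fix t assume "t \<in> ?T"
      then obtain g u w where t: "t = (g, u, w)" "g \<in> trunc_funs n" by auto
      then have "?r (g(n := (u + w) / 2, Suc n := (u - w) / 2)) = g"
        unfolding trunc_funs_def by (auto simp: fun_eq_iff)
      then show "\<phi> (\<psi> t) = t" unfolding t \<phi>_def \<psi> using halves(1,2) by simp
    qed
    show "\<phi> ` ?A \<subseteq> ?T" using Q by (auto simp: \<phi>_def trunc_funs_def)
    show "\<psi> ` ?T \<subseteq> ?A"
    proof
      fix f assume "f \<in> \<psi> ` ?T"
      then obtain g u w where g: "g \<in> trunc_funs n" "diag_quad n d g + u * w = 0"
        and f: "f = g(n := (u + w) / 2, Suc n := (u - w) / 2)" by (auto simp: \<psi>_def)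
      have "?r f = g" using g(1) unfolding f trunc_funs_def by (auto simp: fun_eq_iff)
      then have "diag_quad (Suc (Suc n)) d f = diag_quad n d g + u * w"
        unfolding Q using halves(3)[of u w] unfolding f by (simp add: algebra_simps)
      moreover have "f \<in> trunc_funs (Suc (Suc n))" using g(1) unfolding f trunc_funs_def by auto
      ultimately show "f \<in> ?A" using g(2) by simp
    qed
  qed
  then show ?thesis unfolding isotropic_count_def by (rule bij_betw_same_card)
qed

text \<open>Solutions of Q(g) + u w = 0: for u = 0 any w works when Q(g) = 0, and for u \<noteq> 0 there is
  exactly one w for every g.\<close>
lemma card_hyperbolic_solutions:
  "card {(g, u, w). g \<in> trunc_funs n \<and> diag_quad n d g + u * w = (0::'a::{finite,field})}
     = isotropic_count n d * card (UNIV::'a set) + card (UNIV::'a set) ^ n * (card (UNIV::'a set) - 1)"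
proof -
  let ?T = "{(g, u, w). g \<in> trunc_funs n \<and> diag_quad n d g + u * w = (0::'a)}"
  let ?Ta = "{(g, u, w::'a). g \<in> trunc_funs n \<and> diag_quad n d g = 0 \<and> u = (0::'a)}"
  let ?Tb = "{(g, u, w). g \<in> trunc_funs n \<and> u \<noteq> 0 \<and> w = - diag_quad n d g / (u::'a)}"
  have split: "?T = ?Ta \<union> ?Tb"
  proof
    show "?T \<subseteq> ?Ta \<union> ?Tb"
    proof
      fix t assume t: "t \<in> ?T"
      obtain g u w where gt: "t = (g, u, w)" by (cases t)
      show "t \<in> ?Ta \<union> ?Tb"
      proof (cases "u = 0")
        case False
        then have "w = - diag_quad n d g / u" using t gt by (simp add: field_simps add_eq_0_iff2)
        then show ?thesis using t gt False by simp
      qed (use t gt in simp)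
    qed
    show "?Ta \<union> ?Tb \<subseteq> ?T" by auto
  qed
  have "bij_betw (\<lambda>(g, w). (g, 0, w)) ({f \<in> trunc_funs n. diag_quad n d f = 0} \<times> UNIV) ?Ta"
    by (rule bij_betw_byWitness[where f'="\<lambda>(g, u, w). (g, w)"]) auto
  then have "card ?Ta = card ({f \<in> trunc_funs n. diag_quad n d f = 0} \<times> (UNIV::'a set))"
    by (simp add: bij_betw_same_card)
  then have ca: "card ?Ta = isotropic_count n d * card (UNIV::'a set)"
    unfolding isotropic_count_def by (simp add: card_cartesian_product)
  have "bij_betw (\<lambda>(g, u). (g, u, - diag_quad n d g / u)) (trunc_funs n \<times> (UNIV - {0})) ?Tb"
    by (rule bij_betw_byWitness[where f'="\<lambda>(g, u, w). (g, u)"]) auto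
  then have "card ((trunc_funs n :: (nat \<Rightarrow> 'a) set) \<times> (UNIV - {0::'a})) = card ?Tb"
    by (rule bij_betw_same_card)
  then have cb: "card ?Tb = card (UNIV::'a set) ^ n * (card (UNIV::'a set) - 1)"
    by (simp add: card_cartesian_product card_trunc_funs card_Diff_subset)
  have "finite ?Ta" "finite ?Tb"
    by (rule finite_subset[of _ "trunc_funs n \<times> UNIV"], auto)+
  moreover have "?Ta \<inter> ?Tb = {}" by auto
  ultimately show ?thesis unfolding split using ca cb by (simp add: card_Un_disjoint)
qed

lemma isotropic_count_hyperbolic_step:
  assumes odd_card: "odd (card (UNIV::'a::{finite,field} set))"
    and d: "d n = (1::'a)" "d (Suc n) = -1"
  shows "real (isotropic_count (Suc (Suc n)) d) = real (card (UNIV::'a set)) * real (isotropic_count n d)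
     + real (card (UNIV::'a set)) ^ Suc n - real (card (UNIV::'a set)) ^ n"
proof -
  have "isotropic_count (Suc (Suc n)) d
      = isotropic_count n d * card (UNIV::'a set) + card (UNIV::'a set) ^ n * (card (UNIV::'a set) - 1)"
    using hyperbolic_change_of_variables[OF odd_card d] card_hyperbolic_solutions by simp
  then have "real (isotropic_count (Suc (Suc n)) d) = real (isotropic_count n d) * real (card (UNIV::'a set))
      + real (card (UNIV::'a set)) ^ n * (real (card (UNIV::'a set)) - 1)"
    using card_field_ge_2[where 'a='a] by (simp add: of_nat_diff)
  then show ?thesis by (simp add: algebra_simps)
qed


definition hyp_ext :: "nat \<Rightarrow> (nat \<Rightarrow> 'a::comm_ring_1) \<Rightarrow> nat \<Rightarrow> 'a" where
  "hyp_ext n0 d i = (if i < n0 then d i else if even (i - n0) then 1 else -1)"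

lemma prod_hyp_ext: "(\<Prod>i<n0 + 2 * m. hyp_ext n0 d i) = (\<Prod>i<n0. d i) * (-1) ^ m"
proof (induction m)
  case 0
  show ?case by (simp add: hyp_ext_def)
next
  case (Suc m)
  have "n0 + 2 * Suc m = Suc (Suc (n0 + 2 * m))" by simp
  then show ?case using Suc.IH by (simp add: hyp_ext_def)
qed

text \<open>Each hyperbolic plane multiplies the count by q and adds q^{N}(q - 1); in closed form
  (with the factor q cleared):\<close>
lemma isotropic_count_hyp_ext:
  assumes odd_card: "odd (card (UNIV::'a::{finite,field} set))"
  defines "q \<equiv> real (card (UNIV::'a set))"
  shows "q * real (isotropic_count (n0 + 2 * m) (hyp_ext n0 d :: nat \<Rightarrow> 'a))
     = q ^ Suc m * real (isotropic_count n0 (hyp_ext n0 d)) + q ^ (n0 + m) * (q ^ m - 1)"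
proof (induction m)
  case (Suc m)
  let ?N = "n0 + 2 * m" and ?Z = "\<lambda>n. real (isotropic_count n (hyp_ext n0 d :: nat \<Rightarrow> 'a))"
  have "hyp_ext n0 d ?N = (1::'a)" "hyp_ext n0 d (Suc ?N) = (-1::'a)" by (simp_all add: hyp_ext_def)
  then have step: "?Z (Suc (Suc ?N)) = q * ?Z ?N + q ^ Suc ?N - q ^ ?N"
    unfolding q_def by (rule isotropic_count_hyperbolic_step[OF odd_card])
  have N: "n0 + 2 * Suc m = Suc (Suc ?N)" and pN: "q ^ ?N = q ^ (n0 + m) * q ^ m"
    by (simp_all add: power_add[symmetric] mult_2 add.assoc)
  have "q * ?Z (n0 + 2 * Suc m) = q * (q * ?Z ?N) + q * (q * q ^ ?N) - q * q ^ ?N"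
    unfolding N step by (simp add: algebra_simps)
  also have "\<dots> = q * (q ^ Suc m * ?Z n0 + q ^ (n0 + m) * (q ^ m - 1)) + q * (q * q ^ ?N) - q * q ^ ?N"
    using Suc.IH by simp
  also have "\<dots> = q ^ Suc (Suc m) * ?Z n0 + q ^ (n0 + Suc m) * (q ^ Suc m - 1)"
    unfolding pN by (simp add: algebra_simps)
  finally show ?case .
qed simp


lemma isotropic_count_zero: "isotropic_count 0 d = 1"
  by (rule isotropic_count_anisotropic) simp

lemma isotropic_count_hyp_ext_one:
  assumes "(e::'a::field) \<noteq> 0"
  shows "isotropic_count 1 (hyp_ext 1 (\<lambda>_. e)) = 1"
  by (rule isotropic_count_anisotropic) (use assms in \<open>simp add: diag_quad_def hyp_ext_def\<close>)

lemma isotropic_count_hyp_ext_two: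
  assumes \<eta>: "(\<eta>::'a::field) \<notin> squares"
  shows "isotropic_count 2 (hyp_ext 2 (\<lambda>i. if i = 0 then 1 else - \<eta>)) = 1"
proof (rule isotropic_count_anisotropic)
  fix f assume "diag_quad 2 (hyp_ext 2 (\<lambda>i. if i = 0 then 1 else - \<eta>)) f = 0"
  then have Q: "f 0 * f 0 - \<eta> * (f 1 * f 1) = 0"
    unfolding diag_quad_def hyp_ext_def by (simp add: numeral_2_eq_2)
  have "f 1 = 0"
  proof (rule ccontr)
    assume "f 1 \<noteq> 0"
    then have "\<eta> = (f 0 / f 1) * (f 0 / f 1)" using Q by (simp add: field_simps)
    then have "\<eta> \<in> squares" unfolding squares_def by (rule image_eqI) simp
    then show False using \<eta> by simp
  qed
  moreover have "f 0 = 0" using Q calculation by simp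
  ultimately show "\<forall>i<2. f i = 0" by (simp add: less_2_cases_iff)
qed


section \<open>Nondegenerate forms up to equivalence\<close>

text \<open>In even dimension 2m there are two classes, represented by m hyperbolic planes and by an
  anisotropic plane plus m - 1 hyperbolic planes; they are told apart by the square class of the
  determinant, which is the only invariant of nondegenerate diagonal forms.\<close>
lemma classify_even:
  assumes odd_card: "odd (card (UNIV::'a::{finite,field} set))"
    and B: "(B::'a mat) \<in> carrier_mat k k" "transpose_mat B = B" "invertible_mat B"
    and k: "k = 2 * Suc m" and \<eta>: "\<eta> \<notin> squares"
  shows "equiv_forms k (bform B) (dform k (hyp_ext 0 (\<lambda>_. 1))) \<or>
         equiv_forms k (bform B) (dform k (hyp_ext 2 (\<lambda>i. if i = 0 then 1 else - \<eta>)))"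
proof -
  interpret nondeg_sym_form B k using odd_card B by unfold_locales
  obtain d where d: "\<forall>i<k. d i \<noteq> 0" "equiv_forms k (bform B) (dform k d)"
    using diagonalization by blast
  define \<epsilon> where "\<epsilon> = (-1::'a) ^ Suc m"
  have \<epsilon>\<epsilon>: "\<epsilon> * \<epsilon> = 1" unfolding \<epsilon>_def by (simp add: power_mult_distrib[symmetric])
  have k1: "k \<ge> 1" using k by simp
  have p0: "(\<Prod>i<k. d i) * \<epsilon> \<noteq> 0" using d(1) \<epsilon>\<epsilon> by auto
  have "(\<Prod>i<0 + 2 * Suc m. hyp_ext 0 (\<lambda>_. 1::'a) i) = \<epsilon>"
    unfolding \<epsilon>_def using prod_hyp_ext[of 0 "\<lambda>_. 1::'a" "Suc m"] by simp
  then have prod1: "(\<Prod>i<k. hyp_ext 0 (\<lambda>_. 1) i) = \<epsilon>" using k by simp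
  have "(\<Prod>i<2 + 2 * m. hyp_ext 2 (\<lambda>i. if i = 0 then 1 else - \<eta>) i) = (1 * - \<eta>) * (-1) ^ m"
    using prod_hyp_ext[of 2 "\<lambda>i. if i = 0 then 1 else - \<eta>" m] by (simp add: numeral_2_eq_2)
  then have prod2: "(\<Prod>i<k. hyp_ext 2 (\<lambda>i. if i = 0 then 1 else - \<eta>) i) = \<eta> * \<epsilon>"
    using k unfolding \<epsilon>_def by simp
  have hyp_nz: "\<forall>i<k. hyp_ext 0 (\<lambda>_. 1) i \<noteq> (0::'a)"
    "\<forall>i<k. hyp_ext 2 (\<lambda>i. if i = 0 then 1 else - \<eta>) i \<noteq> 0"
    using nonsquare_nonzero[OF \<eta>] by (simp_all add: hyp_ext_def)
  show ?thesis
  proof (cases "(\<Prod>i<k. d i) * \<epsilon> \<in> squares")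
    case True
    then obtain s where s: "(\<Prod>i<k. d i) * \<epsilon> = s * s" unfolding squares_def by auto
    then have "(\<Prod>i<k. d i) = \<epsilon> * (s * s)" using \<epsilon>\<epsilon> by (metis mult.assoc mult.commute mult_1_right)
    then have "equiv_forms k (dform k d) (dform k (hyp_ext 0 (\<lambda>_. 1)))"
      using equiv_dform_discriminant[OF odd_card k1 d(1) hyp_nz(1)] s p0 prod1 by auto
    then show ?thesis using d(2) equiv_forms_trans by blast
  next
    case False
    then obtain t where t: "(\<Prod>i<k. d i) * \<epsilon> = \<eta> * (t * t)"
      using square_classes[OF odd_card \<eta> p0] by blast
    then have "(\<Prod>i<k. d i) = (\<eta> * \<epsilon>) * (t * t)" using \<epsilon>\<epsilon>
      by (metis mult.assoc mult.commute mult_1_right)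
    then have "equiv_forms k (dform k d) (dform k (hyp_ext 2 (\<lambda>i. if i = 0 then 1 else - \<eta>)))"
      using equiv_dform_discriminant[OF odd_card k1 d(1) hyp_nz(2)] t p0 prod2 by auto
    then show ?thesis using d(2) equiv_forms_trans by blast
  qed
qed

text \<open>In odd dimension there is a single class: scaling by the determinant p turns the
  determinant into p^(k+1), a square.\<close>
lemma classify_odd:
  assumes odd_card: "odd (card (UNIV::'a::{finite,field} set))"
    and B: "(B::'a mat) \<in> carrier_mat k k" "transpose_mat B = B" "invertible_mat B"
    and k: "k = 2 * m + 1"
  shows "equiv_forms k (bform B) (dform k (hyp_ext 1 (\<lambda>_. (-1) ^ m)))"
proof -
  interpret nondeg_sym_form B k using odd_card B by unfold_locales
  obtain d where d: "\<forall>i<k. d i \<noteq> 0" "equiv_forms k (bform B) (dform k d)"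
    using diagonalization by blast
  define p where "p = (\<Prod>i<k. d i)"
  have p0: "p \<noteq> 0" unfolding p_def using d(1) by simp
  have "(\<Prod>i<k. p * d i) = p ^ k * p" unfolding p_def by (simp add: prod.distrib)
  also have "\<dots> = p ^ Suc m * p ^ Suc m" unfolding k by (simp add: power_add[symmetric] mult_2)
  finally have disc_pd: "(\<Prod>i<k. p * d i) = p ^ Suc m * p ^ Suc m" .
  have "(\<Prod>i<1 + 2 * m. hyp_ext 1 (\<lambda>_. (-1::'a) ^ m) i) = (-1) ^ m * (-1) ^ m"
    using prod_hyp_ext[of 1 "\<lambda>_. (-1::'a) ^ m" m] by simp
  then have "(\<Prod>i<k. hyp_ext 1 (\<lambda>_. (-1::'a) ^ m) i) = 1"
    unfolding k by (simp add: power_mult_distrib[symmetric])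
  then have "equiv_forms k (dform k (\<lambda>i. p * d i)) (dform k (hyp_ext 1 (\<lambda>_. (-1) ^ m)))"
    using equiv_dform_discriminant[OF odd_card _ _ _ power_not_zero[OF p0, of "Suc m"]] disc_pd
      p0 d(1) k by (simp add: hyp_ext_def)
  then show ?thesis using d(2) equiv_dform_scale[OF p0] equiv_forms_trans by blast
qed


definition gram_graph :: "nat \<Rightarrow> 'a vec list \<Rightarrow> 'a::comm_ring_1 mat \<Rightarrow> lgraph" where
  "gram_graph k xs B = looped_graph_of (transpose_mat (mat_of_cols k xs) * B * mat_of_cols k xs)"

lemma proj_reps_carrier: "proj_reps k xs \<Longrightarrow> set xs \<subseteq> carrier_vec k"
  unfolding proj_reps_def by auto

lemma gram_graph_iso_form_graph:
  assumes "set xs \<subseteq> carrier_vec k" "B \<in> carrier_mat k k"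
  shows "lgraph_iso (gram_graph k xs B) (form_graph xs (bform B))"
  unfolding lgraph_iso_def gram_graph_def looped_graph_of_def form_graph_def
  using congruence_entry[OF assms] by (intro exI[of _ id]) auto

lemma gram_graph_iso:
  assumes pr: "proj_reps k xs" and B: "B \<in> carrier_mat k k" and B': "B' \<in> carrier_mat k k"
    and eq: "equiv_forms k (bform B) (bform (B' :: 'a::{finite,field} mat))"
  shows "lgraph_iso (gram_graph k xs B) (gram_graph k xs B')"
proof -
  have "lgraph_iso (form_graph xs (bform B')) (form_graph xs (bform B))"
    by (rule equiv_forms_graph_iso[OF pr eq homogeneous_bform[OF B]])
  then show ?thesis
    using gram_graph_iso_form_graph[OF proj_reps_carrier[OF pr]] B B'
      lgraph_iso_trans lgraph_iso_sym by metis
qed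

lemma gram_graph_diag_in_gk:
  assumes "\<forall>i<k. (d i :: 'a::field) \<noteq> 0"
  shows "gram_graph k xs (mat_diag k d) \<in> gk_graphs k xs"
proof -
  have "mat_diag k d \<in> carrier_mat k k \<and> transpose_mat (mat_diag k d) = mat_diag k d \<and>
      invertible_mat (mat_diag k d)"
    using assms by (simp add: mat_diag_symmetric mat_diag_invertible)
  then show ?thesis unfolding gk_graphs_def gram_graph_def by blast
qed

lemma gk_graph_iso_diag:
  assumes pr: "proj_reps k xs" and G: "G \<in> gk_graphs k xs"
    and reduce: "\<And>B. B \<in> carrier_mat k k \<Longrightarrow> transpose_mat B = B \<Longrightarrow> invertible_mat B \<Longrightarrow>
      equiv_forms k (bform B) (dform k d) \<or> equiv_forms k (bform B) (dform k (d' :: nat \<Rightarrow> 'a::{finite,field}))"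
  shows "lgraph_iso G (gram_graph k xs (mat_diag k d)) \<or> lgraph_iso G (gram_graph k xs (mat_diag k d'))"
proof -
  obtain B where B: "G = gram_graph k xs B" "B \<in> carrier_mat k k" "transpose_mat B = B" "invertible_mat B"
    using G unfolding gk_graphs_def gram_graph_def by blast
  have diag: "equiv_forms k (dform k e) (bform (mat_diag k e))" for e :: "nat \<Rightarrow> 'a"
    by (rule equiv_formsI[OF scalar_map_id, of 1]) (simp_all add: bform_mat_diag)
  show ?thesis
    using reduce[OF B(2-4)] equiv_forms_trans[OF _ diag] gram_graph_iso[OF pr B(2)] B(1) by auto
qed

lemma nonlooped_count_hyp_ext:
  assumes odd_card: "odd (card (UNIV::'a::{finite,field} set))"
    and pr: "proj_reps (n0 + 2 * m) xs" and base: "isotropic_count n0 (hyp_ext n0 d :: nat \<Rightarrow> 'a) = 1"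
    and pos: "n0 + m \<ge> 1"
  defines "q \<equiv> real (card (UNIV::'a set))"
  shows "real (nonlooped_count (gram_graph (n0 + 2 * m) xs (mat_diag (n0 + 2 * m) (hyp_ext n0 d))))
     = (q ^ m - 1) * (q ^ (n0 + m - 1) + 1) / (q - 1)"
proof -
  let ?k = "n0 + 2 * m"
  let ?G = "gram_graph ?k xs (mat_diag ?k (hyp_ext n0 d))"
  let ?Z = "real (isotropic_count ?k (hyp_ext n0 d))"
  have q2: "q \<ge> 2" unfolding q_def using card_field_ge_2[where 'a='a] by simp
  have "nonlooped_count ?G = nonlooped_count (form_graph xs (bform (mat_diag ?k (hyp_ext n0 d))))"
    by (rule lgraph_iso_nonlooped_count[OF gram_graph_iso_form_graph[OF proj_reps_carrier[OF pr]]]) simp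
  also have "\<dots> * (card (UNIV::'a set) - 1) + 1 = card {v \<in> carrier_vec ?k. bform (mat_diag ?k (hyp_ext n0 d)) v v = 0}"
    by (rule nonlooped_count_isotropic[OF pr homogeneous_bform]) simp
  also have "{v \<in> carrier_vec ?k. bform (mat_diag ?k (hyp_ext n0 d)) v v = 0} = {v \<in> carrier_vec ?k. dform ?k (hyp_ext n0 d) v v = 0}"
    by (auto simp: bform_mat_diag)
  finally have "nonlooped_count ?G * (card (UNIV::'a set) - 1) + 1 = isotropic_count ?k (hyp_ext n0 d)"
    by (simp add: isotropic_count_vec)
  then have "real (nonlooped_count ?G * (card (UNIV::'a set) - 1) + 1) = ?Z" by (rule arg_cong)
  then have count: "real (nonlooped_count ?G) * (q - 1) + 1 = ?Z"
    unfolding q_def using card_field_ge_2[where 'a='a] by (simp add: of_nat_diff)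
  have "n0 + m = Suc (n0 + m - 1)" using pos by simp
  then have "q ^ (n0 + m) = q * q ^ (n0 + m - 1)" by (metis power_Suc)
  moreover have "q * ?Z = q ^ Suc m + q ^ (n0 + m) * (q ^ m - 1)"
    using isotropic_count_hyp_ext[OF odd_card, of n0 m d] base unfolding q_def by simp
  ultimately have "q * ?Z = q * (q ^ m + q ^ (n0 + m - 1) * (q ^ m - 1))" by (simp add: algebra_simps)
  then have "?Z = q ^ m + q ^ (n0 + m - 1) * (q ^ m - 1)" using q2 by simp
  then have "real (nonlooped_count ?G) * (q - 1) = (q ^ m - 1) * (q ^ (n0 + m - 1) + 1)"
    using count by (simp add: algebra_simps)
  then show ?thesis using q2 by (simp add: field_simps)
qed


text \<open>Even dimension 2m: the hyperbolic form and the form with an anisotropic plane give the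
  two classes; their counts of nonlooped vertices differ by 2 q^(m-1).\<close>
theorem even_dimension_graphs:
  fixes xs :: "'a::{finite,field} vec list"
  assumes odd_card: "odd (card (UNIV::'a set))" and pr: "proj_reps k xs" and k: "k = 2 * m" "m \<ge> 1"
  defines "q \<equiv> real (card (UNIV::'a set))"
  shows "\<exists>G1 G2. G1 \<in> gk_graphs k xs \<and> G2 \<in> gk_graphs k xs \<and> \<not> lgraph_iso G1 G2 \<and>
     (\<forall>G\<in>gk_graphs k xs. lgraph_iso G G1 \<or> lgraph_iso G G2) \<and>
     real (nonlooped_count G1) = (q ^ m - 1) * (q ^ (m - 1) + 1) / (q - 1) \<and>
     real (nonlooped_count G2) = (q ^ m + 1) * (q ^ (m - 1) - 1) / (q - 1)"
proof -
  obtain m' where m': "m = Suc m'" using k(2) by (cases m) auto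
  obtain \<eta> :: 'a where \<eta>: "\<eta> \<notin> squares" using exists_nonsquare[OF odd_card] by blast
  define d1 where "d1 = hyp_ext 0 (\<lambda>_. 1::'a)"
  define d2 where "d2 = hyp_ext 2 (\<lambda>i. if i = 0 then 1 else - \<eta>)"
  define G1 where "G1 = gram_graph k xs (mat_diag k d1)"
  define G2 where "G2 = gram_graph k xs (mat_diag k d2)"
  have q2: "q \<ge> 2" unfolding q_def using card_field_ge_2[where 'a='a] by simp
  have "G1 \<in> gk_graphs k xs" "G2 \<in> gk_graphs k xs"
    unfolding G1_def G2_def d1_def d2_def using nonsquare_nonzero[OF \<eta>]
    by (auto intro!: gram_graph_diag_in_gk simp: hyp_ext_def split: if_split_asm)
  moreover have c1: "real (nonlooped_count G1) = (q ^ m - 1) * (q ^ (m - 1) + 1) / (q - 1)"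
  proof -
    have "proj_reps (0 + 2 * m) xs" using pr k by simp
    from nonlooped_count_hyp_ext[OF odd_card this isotropic_count_zero] show ?thesis
      using k unfolding G1_def d1_def q_def by simp
  qed
  moreover have c2: "real (nonlooped_count G2) = (q ^ m + 1) * (q ^ (m - 1) - 1) / (q - 1)"
    using nonlooped_count_hyp_ext[OF odd_card, of 2 m' xs] pr k m' isotropic_count_hyp_ext_two[OF \<eta>]
    unfolding G2_def d2_def q_def by (simp add: mult.commute)
  moreover have "\<not> lgraph_iso G1 G2"
  proof
    assume "lgraph_iso G1 G2"
    then have "(q ^ m - 1) * (q ^ (m - 1) + 1) / (q - 1) = (q ^ m + 1) * (q ^ (m - 1) - 1) / (q - 1)"
      using c1 c2 lgraph_iso_nonlooped_count by metis
    then have "2 * (q ^ m' * (q - 1)) = 0" using q2 unfolding m' by (simp add: field_simps algebra_simps)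
    then show False using q2 by simp
  qed
  moreover have "\<forall>G\<in>gk_graphs k xs. lgraph_iso G G1 \<or> lgraph_iso G G2"
    using gk_graph_iso_diag[OF pr _ classify_even[OF odd_card _ _ _ _ \<eta>]] k m'
    unfolding G1_def G2_def d1_def d2_def by simp
  ultimately show ?thesis by blast
qed

theorem odd_dimension_graphs:
  fixes xs :: "'a::{finite,field} vec list"
  assumes odd_card: "odd (card (UNIV::'a set))" and pr: "proj_reps k xs" and k: "k = 2 * m + 1"
  defines "q \<equiv> real (card (UNIV::'a set))"
  shows "\<exists>G1\<in>gk_graphs k xs. (\<forall>G\<in>gk_graphs k xs. lgraph_iso G G1) \<and>
     real (nonlooped_count G1) = (q ^ (2 * m) - 1) / (q - 1)"
proof -
  define d where "d = hyp_ext 1 (\<lambda>_. (-1::'a) ^ m)"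
  define G1 where "G1 = gram_graph k xs (mat_diag k d)"
  have "G1 \<in> gk_graphs k xs"
    unfolding G1_def d_def by (auto intro!: gram_graph_diag_in_gk simp: hyp_ext_def split: if_split_asm)
  moreover have "real (nonlooped_count G1) = (q ^ m - 1) * (q ^ m + 1) / (q - 1)"
    using nonlooped_count_hyp_ext[OF odd_card, of 1 m xs] pr k
      isotropic_count_hyp_ext_one[of "(-1::'a) ^ m"]
    unfolding G1_def d_def q_def by (simp add: add.commute)
  moreover have "(q ^ m - 1) * (q ^ m + 1) = q ^ (2 * m) - 1"
  proof -
    have "q ^ (2 * m) = q ^ m * q ^ m" by (simp only: mult_2 power_add)
    then show ?thesis by (simp add: algebra_simps)
  qed
  moreover have "\<forall>G\<in>gk_graphs k xs. lgraph_iso G G1"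
    using gk_graph_iso_diag[OF pr _ disjI1[OF classify_odd[OF odd_card _ _ _ k]]]
    unfolding G1_def d_def by blast
  ultimately show ?thesis by auto
qed

theorem mainTheorem15:
  fixes xs :: "'a::{finite,field} vec list" and k :: nat
  defines "q \<equiv> card (UNIV :: 'a set)"
  assumes "odd q" and "proj_reps k xs"
  shows "(\<forall>m. k = 2 * m \<and> m \<ge> 1 \<longrightarrow>
            (\<exists>G1 G2. G1 \<in> gk_graphs k xs \<and> G2 \<in> gk_graphs k xs \<and> \<not> lgraph_iso G1 G2 \<and>
               (\<forall>G\<in>gk_graphs k xs. lgraph_iso G G1 \<or> lgraph_iso G G2) \<and>
               real (nonlooped_count G1) = (real q ^ m - 1) * (real q ^ (m - 1) + 1) / (real q - 1) \<and>
               real (nonlooped_count G2) = (real q ^ m + 1) * (real q ^ (m - 1) - 1) / (real q - 1)))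
       \<and> (\<forall>m. k = 2 * m + 1 \<longrightarrow>
            (\<exists>G1\<in>gk_graphs k xs. (\<forall>G\<in>gk_graphs k xs. lgraph_iso G G1) \<and>
               real (nonlooped_count G1) = (real q ^ (2 * m) - 1) / (real q - 1)))"
  using even_dimension_graphs[OF assms(2)[unfolded q_def] assms(3)]
    odd_dimension_graphs[OF assms(2)[unfolded q_def] assms(3)]
  unfolding q_def by blast

end
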